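(* Let $(V,g)$ be a Euclidean vector space of dimension $n\ge3$. Let $R$ be an algebraic curvature tensor on $V$ and $\mathring{R}$ its induced curvature operator of the second kind, with eigenvalue average $\bar\lambda$. If $1\le p\le\frac n2$ and $\mathring{R}\in\mathcal{C}\left(\frac{(n-1)p}{2},\theta\right)$ (with $\theta>-1$), then for every orthonormal basis $\{e_i\}_{i=1}^n$ of $V$, $$\sum_{i=1}^pR_{ii}\ge\frac{(n-1)p}{n-p+2}\bigl(1-(n-p+1)\theta\bigr)\bar\lambda,$$ where $R_{ii}=\operatorname{Ric}(e_i,e_i)$.
   Context: $S^2_0(V)$ is the space of traceless symmetric two-tensors, of dimension $N=\frac{(n-1)(n+2)}{2}$. An algebraic curvature tensor is $R\in S^2(\wedge^2V)$ satisfying the first Bianchi identity. $\mathring{R}=\pi\circ\overline{R}:S^2_0(V)\to S^2_0(V)$ with $\overline{R}(h)_{ij}=\sum_{k,l}R_{iklj}h_{kl}$ and $\pi$ the projection onto traceless tensors. For a symmetric operator with eigenvalues $\lambda_1\le\cdots\le\lambda_N$ and average $\bar\lambda$, write $\lambda_1+\cdots+\lambda_\alpha:=\lambda_1+\cdots+\lambda_{[\alpha]}+(\alpha-[\alpha])\lambda_{[\alpha]+1}$; $\mathcal{C}(\alpha,\theta)$ is the cone of symmetric operators on $S^2_0(V)$ with $\alpha^{-1}(\lambda_1+\cdots+\lambda_\alpha)\ge-\theta\bar\lambda$. *)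

theory Defs
  imports Complex_Main
begin

text \<open>V = R^n with its standard inner product; vectors are nat => real (components with index < n);
  two-tensors are nat => nat => real; four-tensors are given by their components R a b c d
  with respect to the standard orthonormal basis.\<close>

definition alg_curv_tensor :: "nat \<Rightarrow> (nat \<Rightarrow> nat \<Rightarrow> nat \<Rightarrow> nat \<Rightarrow> real) \<Rightarrow> bool" where
  "alg_curv_tensor n R \<longleftrightarrow>
     (\<forall>i<n. \<forall>j<n. \<forall>k<n. \<forall>l<n.
        R i j k l = - R j i k l \<and>
        R i j k l = - R i j l k \<and>
        R i j k l = R k l i j \<and>
        R i j k l + R j k i l + R k i j l = 0)"

definition tensor4 :: "nat \<Rightarrow> (nat \<Rightarrow> nat \<Rightarrow> nat \<Rightarrow> nat \<Rightarrow> real) \<Rightarrow>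
    (nat \<Rightarrow> real) \<Rightarrow> (nat \<Rightarrow> real) \<Rightarrow> (nat \<Rightarrow> real) \<Rightarrow> (nat \<Rightarrow> real) \<Rightarrow> real" where
  "tensor4 n R x y z w =
     (\<Sum>a<n. \<Sum>b<n. \<Sum>c<n. \<Sum>d<n. R a b c d * x a * y b * z c * w d)"

text \<open>Ricci tensor Ric(x,y) = sum_k R(x,e_k,y,e_k) (convention: R(e_i,e_j,e_i,e_j) is the sectional
  curvature, so that the round sphere has positive curvature operator of the second kind).\<close>
definition ricci :: "nat \<Rightarrow> (nat \<Rightarrow> nat \<Rightarrow> nat \<Rightarrow> nat \<Rightarrow> real) \<Rightarrow> (nat \<Rightarrow> real) \<Rightarrow> (nat \<Rightarrow> real) \<Rightarrow> real" where
  "ricci n R x y = (\<Sum>k<n. tensor4 n R x (\<lambda>a. if a = k then 1 else 0) y (\<lambda>a. if a = k then 1 else 0))"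

definition orthonormal_basis :: "nat \<Rightarrow> (nat \<Rightarrow> nat \<Rightarrow> real) \<Rightarrow> bool" where
  "orthonormal_basis n e \<longleftrightarrow>
     (\<forall>i<n. \<forall>j<n. (\<Sum>a<n. e i a * e j a) = (if i = j then 1 else 0))"

definition S20 :: "nat \<Rightarrow> (nat \<Rightarrow> nat \<Rightarrow> real) set" where
  "S20 n = {h. (\<forall>i j. h i j = h j i) \<and> (\<forall>i j. (n \<le> i \<or> n \<le> j) \<longrightarrow> h i j = 0)
               \<and> (\<Sum>i<n. h i i) = 0}"

definition dimS20 :: "nat \<Rightarrow> nat" where
  "dimS20 n = (n - 1) * (n + 2) div 2"

definition tensor_inner :: "nat \<Rightarrow> (nat \<Rightarrow> nat \<Rightarrow> real) \<Rightarrow> (nat \<Rightarrow> nat \<Rightarrow> real) \<Rightarrow> real" where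
  "tensor_inner n h k = (\<Sum>i<n. \<Sum>j<n. h i j * k i j)"

definition Rbar :: "nat \<Rightarrow> (nat \<Rightarrow> nat \<Rightarrow> nat \<Rightarrow> nat \<Rightarrow> real) \<Rightarrow> (nat \<Rightarrow> nat \<Rightarrow> real) \<Rightarrow> nat \<Rightarrow> nat \<Rightarrow> real" where
  "Rbar n R h i j = (if i < n \<and> j < n then (\<Sum>k<n. \<Sum>l<n. R i k l j * h k l) else 0)"

text \<open>Curvature operator of the second kind: pi o Rbar, pi the projection onto traceless tensors.\<close>
definition Rring :: "nat \<Rightarrow> (nat \<Rightarrow> nat \<Rightarrow> nat \<Rightarrow> nat \<Rightarrow> real) \<Rightarrow> (nat \<Rightarrow> nat \<Rightarrow> real) \<Rightarrow> nat \<Rightarrow> nat \<Rightarrow> real" where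
  "Rring n R h i j =
     (if i < n \<and> j < n then
        Rbar n R h i j - (if i = j then (\<Sum>k<n. Rbar n R h k k) / real n else 0)
      else 0)"

definition sorted_eigenvalues_S20 ::
  "nat \<Rightarrow> ((nat \<Rightarrow> nat \<Rightarrow> real) \<Rightarrow> nat \<Rightarrow> nat \<Rightarrow> real) \<Rightarrow> (nat \<Rightarrow> real) \<Rightarrow> bool" where
  "sorted_eigenvalues_S20 n T lam \<longleftrightarrow>
     (\<forall>a b. a \<le> b \<and> b < dimS20 n \<longrightarrow> lam a \<le> lam b) \<and>
     (\<exists>E. (\<forall>a<dimS20 n. E a \<in> S20 n \<and> T (E a) = (\<lambda>i j. lam a * E a i j)) \<and>
          (\<forall>a<dimS20 n. \<forall>b<dimS20 n. tensor_inner n (E a) (E b) = (if a = b then 1 else 0)))"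

definition eig_avg :: "nat \<Rightarrow> (nat \<Rightarrow> real) \<Rightarrow> real" where
  "eig_avg N lam = (\<Sum>a<N. lam a) / real N"

text \<open>lambda_1 + ... + lambda_alpha (0-based indexing of lam).\<close>
definition eig_partial_sum :: "(nat \<Rightarrow> real) \<Rightarrow> real \<Rightarrow> real" where
  "eig_partial_sum lam \<alpha> =
     (\<Sum>a<nat \<lfloor>\<alpha>\<rfloor>. lam a) + (\<alpha> - of_int \<lfloor>\<alpha>\<rfloor>) * lam (nat \<lfloor>\<alpha>\<rfloor>)"

definition in_cone :: "nat \<Rightarrow> (nat \<Rightarrow> real) \<Rightarrow> real \<Rightarrow> real \<Rightarrow> bool" where
  "in_cone N lam \<alpha> \<theta> \<longleftrightarrow> eig_partial_sum lam \<alpha> / \<alpha> \<ge> - \<theta> * eig_avg N lam"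

end

(* Let E_a be an orthonormal eigenbasis of the curvature operator of the second kind, with
   eigenvalues lam_a.  For traceless symmetric phi, Parseval gives |phi|^2 = sum_a <phi,E_a>^2 and
   <Rbar phi, phi> = sum_a lam_a <phi,E_a>^2.  Testing with e_i e_j + e_j e_i, with e_i e_i - g/n and
   with chi = sum_{k>=p} e_k e_k - (n-p)/n g expresses sectional and Ricci curvatures through such
   sums.  With m = n - p and w = m/(2(m+1)), the combination
     d_a = sum_{i/=j<p} 1/4 <e_i e_j + e_j e_i, E_a>^2 + sum_{i<p<=j} w/2 <e_i e_j + e_j e_i, E_a>^2
           + sum_{i<p} w <e_i e_i - g/n, E_a>^2 + w/m <chi, E_a>^2
   satisfies 0 <= d_a <= 1 and sum_a d_a = (n-1)p/2 =: alpha, while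
     sum_a lam_a d_a = (m+2)/(2(m+1)) sum_{i<p} R_ii - p S/(2n(m+1)).
   Since lam_1 + ... + lam_alpha is the least value of sum_a lam_a d_a over such weights, and the
   same tests give tr = (n+2)S/(2n), i.e. mean eigenvalue S/(n(n-1)), the cone condition
   rearranges into the claim. *)

theory Submission
  imports Defs "HOL-Library.Function_Algebras" "HOL-Analysis.Convex"
begin

lemma sum_apply: "(\<Sum>a\<in>A. f a) x = (\<Sum>a\<in>A. f a x)"
  by (induction A rule: infinite_finite_induct) auto

lemma sum_kronecker [simp]:
  fixes f :: "'a \<Rightarrow> real"
  assumes "finite A"
  shows "(\<Sum>a\<in>A. (if a = b then 1 else 0) * f a) = (if b \<in> A then f b else 0)"
    and "(\<Sum>a\<in>A. f a * (if a = b then 1 else 0)) = (if b \<in> A then f b else 0)"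
    and "(\<Sum>a\<in>A. (if b = a then 1 else 0) * f a) = (if b \<in> A then f b else 0)"
    and "(\<Sum>a\<in>A. f a * (if b = a then 1 else 0)) = (if b \<in> A then f b else 0)"
  using assms by (simp_all add: if_distrib[of "\<lambda>x. x * _"] if_distrib[of "\<lambda>x. _ * x"] cong: if_cong)

lemma sum_reorder_3:
  "(\<Sum>i\<in>I. \<Sum>a\<in>A. \<Sum>b\<in>B. f i a b) = (\<Sum>a\<in>A. \<Sum>b\<in>B. \<Sum>i\<in>I. f i a b)"
  by (subst sum.swap) (intro sum.cong refl sum.swap)

lemma sum_swap_pairs:
  "(\<Sum>a\<in>A. \<Sum>b\<in>B. \<Sum>c\<in>C. \<Sum>d\<in>D. f a b c d) = (\<Sum>c\<in>C. \<Sum>d\<in>D. \<Sum>a\<in>A. \<Sum>b\<in>B. f a b c d)"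
proof -
  have "(\<Sum>a\<in>A. \<Sum>b\<in>B. \<Sum>c\<in>C. \<Sum>d\<in>D. f a b c d) = (\<Sum>c\<in>C. \<Sum>a\<in>A. \<Sum>b\<in>B. \<Sum>d\<in>D. f a b c d)"
    by (rule sum_reorder_3[symmetric])
  also have "\<dots> = (\<Sum>c\<in>C. \<Sum>d\<in>D. \<Sum>a\<in>A. \<Sum>b\<in>B. f a b c d)"
    by (rule sum.cong[OF refl], rule sum_reorder_3[symmetric])
  finally show ?thesis .
qed

lemma sum_reorder_5:
  "(\<Sum>k\<in>K. \<Sum>a\<in>A. \<Sum>b\<in>B. \<Sum>c\<in>C. \<Sum>d\<in>D. f k a b c d)
    = (\<Sum>a\<in>A. \<Sum>b\<in>B. \<Sum>c\<in>C. \<Sum>d\<in>D. \<Sum>k\<in>K. f k a b c d)"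
  by (subst sum_reorder_3) (intro sum.cong refl sum_reorder_3)

lemma sum_lessThan4_cong:
  "(\<And>a b c d. a < n \<Longrightarrow> b < n \<Longrightarrow> c < n \<Longrightarrow> d < n \<Longrightarrow> f a b c d = g a b c d) \<Longrightarrow>
   (\<Sum>a<n. \<Sum>b<n. \<Sum>c<n. \<Sum>d<n. f a b c d) = (\<Sum>a<(n::nat). \<Sum>b<n. \<Sum>c<n. \<Sum>d<n. g a b c d)"
  by (intro sum.cong refl) auto

lemma sum_lessThan_split: "p \<le> n \<Longrightarrow> (\<Sum>i<n. f i) = (\<Sum>i<p. f i) + (\<Sum>i\<in>{p..<n}. f (i::nat))"
  by (simp add: lessThan_atLeast0 sum.atLeastLessThan_concat)

lemma sum_lessThan_blocks:
  assumes "p \<le> n"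
  shows "(\<Sum>i<n. \<Sum>j<n. f i j) = (\<Sum>i<p. \<Sum>j<p. f i j) + (\<Sum>i<p. \<Sum>j\<in>{p..<n}. f i j)
    + (\<Sum>i\<in>{p..<n}. \<Sum>j<p. f i j) + (\<Sum>i\<in>{p..<n}. \<Sum>j\<in>{p..<n}. f (i::nat) (j::nat))"
proof -
  have "(\<Sum>i<n. \<Sum>j<n. f i j) = (\<Sum>i<n. (\<Sum>j<p. f i j) + (\<Sum>j\<in>{p..<n}. f i j))"
    by (intro sum.cong refl sum_lessThan_split[OF assms])
  also have "\<dots> = (\<Sum>i<p. (\<Sum>j<p. f i j) + (\<Sum>j\<in>{p..<n}. f i j))
      + (\<Sum>i\<in>{p..<n}. (\<Sum>j<p. f i j) + (\<Sum>j\<in>{p..<n}. f i j))"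
    by (rule sum_lessThan_split[OF assms])
  finally show ?thesis by (simp add: sum.distrib add.assoc)
qed

lemma sum_mult_double_sum:
  fixes g :: "'a \<Rightarrow> 'b::comm_semiring_0"
  shows "(\<Sum>a\<in>A. g a * (\<Sum>i\<in>I. \<Sum>j\<in>J i. c i j * f i j a))
    = (\<Sum>i\<in>I. \<Sum>j\<in>J i. c i j * (\<Sum>a\<in>A. g a * f i j a))"
proof -
  have "(\<Sum>a\<in>A. g a * (\<Sum>i\<in>I. \<Sum>j\<in>J i. c i j * f i j a))
      = (\<Sum>a\<in>A. \<Sum>i\<in>I. \<Sum>j\<in>J i. c i j * (g a * f i j a))"
    by (simp add: sum_distrib_left algebra_simps)
  also have "\<dots> = (\<Sum>i\<in>I. \<Sum>j\<in>J i. \<Sum>a\<in>A. c i j * (g a * f i j a))"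
    by (subst sum.swap) (rule sum.cong[OF refl], rule sum.swap)
  finally show ?thesis by (simp add: sum_distrib_left)
qed

lemma sum_mult_single_sum:
  fixes g :: "'a \<Rightarrow> 'b::comm_semiring_0"
  shows "(\<Sum>a\<in>A. g a * (\<Sum>i\<in>I. c i * f i a)) = (\<Sum>i\<in>I. c i * (\<Sum>a\<in>A. g a * f i a))"
proof -
  have "(\<Sum>a\<in>A. g a * (\<Sum>i\<in>I. c i * f i a)) = (\<Sum>a\<in>A. \<Sum>i\<in>I. c i * (g a * f i a))"
    by (simp add: sum_distrib_left algebra_simps)
  also have "\<dots> = (\<Sum>i\<in>I. \<Sum>a\<in>A. c i * (g a * f i a))" by (rule sum.swap)
  finally show ?thesis by (simp add: sum_distrib_left)
qed

lemma sum_sq_off_diag_add_diag_le: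
  fixes H :: "'a \<Rightarrow> 'a \<Rightarrow> real"
  assumes "finite I" "w \<le> 1"
  shows "(\<Sum>i\<in>I. \<Sum>j\<in>I-{i}. (H i j)\<^sup>2) + (\<Sum>i\<in>I. w * (H i i)\<^sup>2) \<le> (\<Sum>i\<in>I. \<Sum>j\<in>I. (H i j)\<^sup>2)"
proof -
  have "(\<Sum>i\<in>I. \<Sum>j\<in>I-{i}. (H i j)\<^sup>2) + (\<Sum>i\<in>I. w * (H i i)\<^sup>2)
      \<le> (\<Sum>i\<in>I. (\<Sum>j\<in>I-{i}. (H i j)\<^sup>2) + (H i i)\<^sup>2)"
    unfolding sum.distrib[symmetric]
    by (intro sum_mono add_left_mono) (simp add: mult_right_mono[OF assms(2), simplified])
  also have "\<dots> = (\<Sum>i\<in>I. \<Sum>j\<in>I. (H i j)\<^sup>2)"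
    using assms(1) by (intro sum.cong refl) (simp add: sum.remove[of I])
  finally show ?thesis .
qed

lemma weighted_sq_trace_le:
  fixes H :: "'a \<Rightarrow> 'a \<Rightarrow> real"
  assumes "finite J" "J \<noteq> {}" "0 \<le> w" "w \<le> 1"
  shows "w / real (card J) * (\<Sum>k\<in>J. H k k)\<^sup>2 \<le> (\<Sum>i\<in>J. \<Sum>j\<in>J. (H i j)\<^sup>2)"
proof -
  have card: "real (card J) > 0" using assms(1,2) by (simp add: card_gt_0_iff)
  have "w / real (card J) * (\<Sum>k\<in>J. H k k)\<^sup>2
      \<le> w / real (card J) * (real (card J) * (\<Sum>k\<in>J. (H k k)\<^sup>2))"
    using sum_squared_le_sum_of_squares[of "\<lambda>k. H k k" J] assms(3) card
    by (intro mult_left_mono) (simp_all add: mult.commute)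
  also have "\<dots> \<le> (\<Sum>k\<in>J. (H k k)\<^sup>2)"
    using assms(3,4) card by (simp add: mult_left_le_one_le sum_nonneg)
  also have "\<dots> \<le> (\<Sum>i\<in>J. \<Sum>j\<in>J. (H i j)\<^sup>2)"
    using assms(1) by (intro sum_mono member_le_sum) auto
  finally show ?thesis .
qed

section \<open>Orthonormal families\<close>

lemma (in vector_space) orthogonal_imp_independent:
  fixes ip :: "'b \<Rightarrow> 'b \<Rightarrow> 'a"
  assumes ip_add: "\<And>x y z. ip (x + y) z = ip x z + ip y z"
    and ip_scale: "\<And>c x z. ip (scale c x) z = c * ip x z"
    and orth: "\<And>u v. u \<in> S \<Longrightarrow> v \<in> S \<Longrightarrow> u \<noteq> v \<Longrightarrow> ip u v = 0"
    and nonzero: "\<And>u. u \<in> S \<Longrightarrow> ip u u \<noteq> 0"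
  shows "\<not> dependent S"
proof
  have ip_zero: "ip 0 z = 0" for z using ip_scale[of 0 0 z] by simp
  have ip_sum: "ip (sum f A) z = (\<Sum>a\<in>A. ip (f a) z)" for f and A :: "'b set" and z
    by (induction A rule: infinite_finite_induct) (auto simp: ip_zero ip_add)
  assume "dependent S"
  then obtain t u v0 where t: "finite t" "t \<subseteq> S" "(\<Sum>v\<in>t. scale (u v) v) = 0"
    and v0: "v0 \<in> t" "u v0 \<noteq> 0"
    unfolding dependent_explicit by blast
  have "0 = ip (\<Sum>v\<in>t. scale (u v) v) v0" using t(3) ip_zero by simp
  also have "\<dots> = (\<Sum>v\<in>t. u v * ip v v0)" by (simp add: ip_sum ip_scale)
  also have "\<dots> = u v0 * ip v0 v0 + (\<Sum>v\<in>t-{v0}. u v * ip v v0)"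
    by (simp add: sum.remove[OF t(1) v0(1)])
  also have "(\<Sum>v\<in>t-{v0}. u v * ip v v0) = 0"
    by (rule sum.neutral) (use orth t(2) v0 in auto)
  finally show False using v0 nonzero[of v0] t(2) by auto
qed

text \<open>Completeness by counting dimensions: the residual of \<open>X\<close> is orthogonal to all \<open>E a\<close>, so if
  it were nonzero there would be \<open>m + 1\<close> independent vectors in the span of \<open>B\<close>.  Only the subset
  \<open>V\<close> of the ambient space needs to carry a positive definite \<open>ip\<close>.\<close>
lemma orthonormal_expansion:
  fixes scale :: "real \<Rightarrow> 'v::ab_group_add \<Rightarrow> 'v" and ip :: "'v \<Rightarrow> 'v \<Rightarrow> real"
    and E :: "nat \<Rightarrow> 'v" and V B :: "'v set"
  assumes vs: "vector_space scale"
    and ip_add: "\<And>x y z. ip (x + y) z = ip x z + ip y z"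
    and ip_scale: "\<And>c x z. ip (scale c x) z = c * ip x z"
    and ip_sym: "\<And>x y. ip x y = ip y x"
    and ip_pos: "\<And>x. x \<in> V \<Longrightarrow> ip x x = 0 \<Longrightarrow> x = 0"
    and V_diff: "\<And>x y. x \<in> V \<Longrightarrow> y \<in> V \<Longrightarrow> x - y \<in> V"
    and V_scale: "\<And>c x. x \<in> V \<Longrightarrow> scale c x \<in> V"
    and V_sum: "\<And>f (A::nat set). finite A \<Longrightarrow> (\<And>a. a \<in> A \<Longrightarrow> f a \<in> V) \<Longrightarrow> sum f A \<in> V"
    and span: "V \<subseteq> module.span scale B" and finB: "finite B" and cardB: "card B \<le> m"
    and EV: "\<And>a. a < m \<Longrightarrow> E a \<in> V"
    and Eon: "\<And>a b. a < m \<Longrightarrow> b < m \<Longrightarrow> ip (E a) (E b) = (if a = b then 1 else 0)"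
    and X: "X \<in> V"
  shows "X = (\<Sum>a<m. scale (ip X (E a)) (E a))"
proof (rule ccontr)
  interpret vector_space scale by (rule vs)
  have ip_diff: "ip (x - y) z = ip x z - ip y z" for x y z
    using ip_add[of "x - y" y z] by simp
  have ip_sum: "ip (sum f A) z = (\<Sum>a\<in>A. ip (f a) z)" for f and A :: "nat set" and z
    using ip_add[of 0 0] by (induction A rule: infinite_finite_induct) (auto simp: ip_add)
  define Y where "Y = X - (\<Sum>a<m. scale (ip X (E a)) (E a))"
  assume "X \<noteq> (\<Sum>a<m. scale (ip X (E a)) (E a))"
  then have "Y \<noteq> 0" by (simp add: Y_def)
  have "(\<Sum>a<m. scale (ip X (E a)) (E a)) \<in> V" by (rule V_sum) (auto intro: V_scale EV)
  then have YV: "Y \<in> V" unfolding Y_def using X by (intro V_diff)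
  have YY: "ip Y Y \<noteq> 0" using ip_pos[OF YV] \<open>Y \<noteq> 0\<close> by blast
  have YE: "ip Y (E b) = 0" if "b < m" for b
  proof -
    have "ip (\<Sum>a<m. scale (ip X (E a)) (E a)) (E b) = (\<Sum>a<m. ip X (E a) * (if a = b then 1 else 0))"
      using that by (simp add: ip_sum ip_scale Eon)
    also have "\<dots> = ip X (E b)" using that by simp
    finally show ?thesis by (simp add: Y_def ip_diff)
  qed
  define S where "S = insert Y (E ` {..<m})"
  have "inj_on E {..<m}"
    by (rule inj_onI) (metis Eon lessThan_iff zero_neq_one)
  moreover have "Y \<notin> E ` {..<m}"
    using YE Eon YY by (auto simp: ip_sym)
  ultimately have "card S = Suc m" unfolding S_def by (simp add: card_image)
  moreover have "\<not> dependent S"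
    using YE Eon YY ip_sym
    by (intro orthogonal_imp_independent[OF ip_add ip_scale]) (auto simp: S_def)
  moreover have "S \<subseteq> span B" using span EV YV unfolding S_def by auto
  ultimately show False using independent_span_bound[OF finB] cardB by fastforce
qed

lemma vector_space_fun_scale: "vector_space (\<lambda>(c::real) (v::'a \<Rightarrow> real). \<lambda>a. c * v a)"
  by unfold_locales (auto simp: fun_eq_iff algebra_simps)

text \<open>The rows of \<open>e\<close> are the basis vectors; the columns of an orthogonal matrix are orthonormal too.\<close>
lemma orthonormal_basis_columns:
  assumes "orthonormal_basis n e" "a < n" "b < n"
  shows "(\<Sum>k<n. e k a * e k b) = (if a = b then 1 else 0)"
proof -
  let ?scale = "\<lambda>(c::real) (v::nat \<Rightarrow> real). \<lambda>a. c * v a"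
  let ?ip = "\<lambda>x y. \<Sum>a<n. x a * y a"
  let ?V = "{v::nat\<Rightarrow>real. \<forall>a. n \<le> a \<longrightarrow> v a = 0}"
  let ?d = "\<lambda>k::nat. \<lambda>a::nat. if a = k then (1::real) else 0"
  let ?B = "?d ` {..<n}"
  let ?E = "\<lambda>k a. if a < n then e k a else 0"
  interpret vector_space ?scale by (rule vector_space_fun_scale)
  have span: "?V \<subseteq> span ?B"
  proof
    fix v assume v: "v \<in> ?V"
    have "v = (\<Sum>k<n. ?scale (v k) (?d k))"
    proof
      fix a
      show "v a = (\<Sum>k<n. ?scale (v k) (?d k)) a"
        using v by (auto simp: sum_apply if_distrib cong: if_cong)
    qed
    also have "\<dots> \<in> span ?B"
      by (intro span_sum span_scale span_base) auto
    finally show "v \<in> span ?B" .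
  qed
  have eq: "?d b = (\<Sum>k<n. ?scale (?ip (?d b) (?E k)) (?E k))"
  proof (rule orthonormal_expansion[OF vector_space_fun_scale, where V = ?V and B = ?B])
    show "x = 0" if "x \<in> ?V" "?ip x x = 0" for x
    proof -
      have "\<forall>a\<in>{..<n}. x a * x a = 0"
        using that(2) by (subst (asm) sum_nonneg_eq_0_iff) auto
      then show "x = 0" using that(1) by (auto simp: fun_eq_iff) (metis lessThan_iff not_le)
    qed
    show "card ?B \<le> n" using card_image_le[of "{..<n}" ?d] by simp
    show "?ip (?E a) (?E c) = (if a = c then 1 else 0)" if "a < n" "c < n" for a c
      using assms(1) that unfolding orthonormal_basis_def by auto
  qed (use assms span in \<open>auto simp: sum.distrib algebra_simps sum_distrib_left sum_apply\<close>)
  have "?d b a = (\<Sum>k<n. ?ip (?d b) (?E k) * ?E k a)"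
    using fun_cong[OF eq, of a] by (simp add: sum_apply)
  also have "\<dots> = (\<Sum>k<n. e k b * e k a)"
    using assms by (intro sum.cong refl) simp
  finally show ?thesis by (auto simp: mult.commute)
qed

lemma orthonormal_basis_sum_squares:
  assumes "orthonormal_basis n e"
  shows "(\<Sum>i<n. (\<Sum>a<n. f a * e i a)\<^sup>2) = (\<Sum>a<n. (f a)\<^sup>2)"
proof -
  have "(\<Sum>i<n. (\<Sum>a<n. f a * e i a)\<^sup>2) = (\<Sum>i<n. \<Sum>a<n. \<Sum>c<n. f a * f c * (e i a * e i c))"
    unfolding power2_eq_square sum_product by (simp add: algebra_simps)
  also have "\<dots> = (\<Sum>a<n. \<Sum>c<n. \<Sum>i<n. f a * f c * (e i a * e i c))"
    by (intro sum_reorder_3)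
  also have "\<dots> = (\<Sum>a<n. \<Sum>c<n. f a * f c * (if a = c then 1 else 0))"
    using orthonormal_basis_columns[OF assms] by (simp add: sum_distrib_left[symmetric])
  also have "\<dots> = (\<Sum>a<n. (f a)\<^sup>2)" by (simp add: power2_eq_square)
  finally show ?thesis .
qed

section \<open>Traceless symmetric tensors\<close>

definition tensor_scale :: "real \<Rightarrow> (nat \<Rightarrow> nat \<Rightarrow> real) \<Rightarrow> (nat \<Rightarrow> nat \<Rightarrow> real)" where
  "tensor_scale c h = (\<lambda>i j. c * h i j)"

lemma vector_space_tensor_scale: "vector_space tensor_scale"
  by unfold_locales (auto simp: fun_eq_iff algebra_simps tensor_scale_def)

lemma card_strict_pairs: "card {(a,b). a < b \<and> b < (n::nat)} = n * (n - 1) div 2"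
proof (induction n)
  case 0 then show ?case by simp
next
  case (Suc n)
  have eq: "{(a,b). a < b \<and> b < Suc n} = {(a,b). a < b \<and> b < n} \<union> (\<lambda>a. (a,n)) ` {..<n}"
    by auto
  have fin: "finite {(a,b). a < b \<and> b < (n::nat)}"
    by (rule finite_subset[of _ "{..<n} \<times> {..<n}"]) auto
  have "card {(a,b). a < b \<and> b < Suc n} = card {(a,b). a < b \<and> b < n} + card ((\<lambda>a. (a,n)) ` {..<n})"
    unfolding eq by (rule card_Un_disjoint) (use fin in auto)
  also have "card ((\<lambda>a. (a,n)) ` {..<n}) = n" by (simp add: card_image inj_on_def)
  finally show ?case using Suc.IH
    by (cases n) (auto simp: algebra_simps)
qed

lemma dimS20_eq: "n \<ge> 1 \<Longrightarrow> dimS20 n = n * (n - 1) div 2 + (n - 1)"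
  by (cases n) (auto simp: dimS20_def algebra_simps)

lemma real_dimS20: "n \<ge> 1 \<Longrightarrow> real (dimS20 n) = real (n - 1) * real (n + 2) / 2"
proof -
  assume "n \<ge> 1"
  then obtain m where m: "n = Suc m" by (cases n) auto
  have "even (m * (m + 3))" by auto
  then have "2 * dimS20 n = (n - 1) * (n + 2)" unfolding dimS20_def m by (simp add: algebra_simps)
  then have "2 * real (dimS20 n) = real (n - 1) * real (n + 2)" by (metis of_nat_mult of_nat_numeral)
  then show ?thesis by simp
qed

definition sym_unit :: "nat \<Rightarrow> nat \<Rightarrow> nat \<Rightarrow> nat \<Rightarrow> real" where
  "sym_unit a b = (\<lambda>i j. (if i = a \<and> j = b then 1 else 0) + (if i = b \<and> j = a then 1 else 0))"

definition diag_unit :: "nat \<Rightarrow> nat \<Rightarrow> nat \<Rightarrow> nat \<Rightarrow> real" where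
  "diag_unit n a = (\<lambda>i j. (if i = a \<and> j = a then 1 else 0) - (if i = n - 1 \<and> j = n - 1 then 1 else 0))"

lemma finite_strict_pairs: "finite {(a, b). a < b \<and> b < (n::nat)}"
  by (rule finite_subset[of _ "{..<n} \<times> {..<n}"]) auto

lemma sum_sym_unit_apply:
  "(\<Sum>(a, b)\<in>{(a, b). a < b \<and> b < n}. tensor_scale (X a b) (sym_unit a b)) i j
    = (if i < j \<and> j < n then X i j else 0) + (if j < i \<and> i < n then X j i else 0)"
proof -
  have "(\<Sum>(a, b)\<in>{(a, b). a < b \<and> b < n}. tensor_scale (X a b) (sym_unit a b)) i j
      = (\<Sum>x\<in>{(a, b). a < b \<and> b < n}. (if x = (i, j) then X i j else 0) + (if x = (j, i) then X j i else 0))"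
    unfolding sum_apply
  proof (intro sum.cong refl)
    fix x :: "nat \<times> nat"
    obtain a b where x: "x = (a, b)" by (cases x)
    show "(case x of (a, b) \<Rightarrow> tensor_scale (X a b) (sym_unit a b)) i j
        = (if x = (i, j) then X i j else 0) + (if x = (j, i) then X j i else 0)"
      unfolding x tensor_scale_def sym_unit_def
      by (cases "i = a"; cases "j = b"; cases "i = b"; cases "j = a") auto
  qed
  also have "\<dots> = (if i < j \<and> j < n then X i j else 0) + (if j < i \<and> i < n then X j i else 0)"
    unfolding sum.distrib using finite_strict_pairs by (simp add: sum.delta)
  finally show ?thesis .
qed

lemma sum_diag_unit_apply:
  "(\<Sum>a<n-1. tensor_scale (X a a) (diag_unit n a)) i j
    = (if i < n - 1 \<and> i = j then X i i else 0) - (if i = n - 1 \<and> j = n - 1 then (\<Sum>a<n-1. X a a) else 0)"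
proof -
  have "(\<Sum>a<n-1. tensor_scale (X a a) (diag_unit n a)) i j
      = (\<Sum>a<n-1. (if a = i then (if i = j then X i i else 0) else 0)
                  - (if i = n - 1 \<and> j = n - 1 then X a a else 0))"
    unfolding sum_apply by (intro sum.cong refl) (auto simp: tensor_scale_def diag_unit_def)
  also have "\<dots> = (if i < n - 1 \<and> i = j then X i i else 0)
      - (if i = n - 1 \<and> j = n - 1 then (\<Sum>a<n-1. X a a) else 0)"
    unfolding sum_subtractf by (cases "i = n - 1 \<and> j = n - 1") (auto simp: sum.delta')
  finally show ?thesis .
qed

lemma S20_decomposition:
  assumes "n \<ge> 1" "X \<in> S20 n"
  shows "X = (\<Sum>(a, b)\<in>{(a, b). a < b \<and> b < n}. tensor_scale (X a b) (sym_unit a b))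
    + (\<Sum>a<n-1. tensor_scale (X a a) (diag_unit n a))"
proof (intro ext)
  fix i j
  have sym: "X i j = X j i" and out: "n \<le> i \<or> n \<le> j \<Longrightarrow> X i j = 0"
    using assms(2) by (auto simp: S20_def)
  have "{..<n} = insert (n-1) {..<n-1}" using assms(1) by auto
  then have tr: "(\<Sum>a<n-1. X a a) = - X (n-1) (n-1)" using assms(2) by (simp add: S20_def)
  consider "i < j" | "j < i" | "i = j" "i < n - 1" | "i = j" "n - 1 \<le> i" by linarith
  then show "X i j = ((\<Sum>(a, b)\<in>{(a, b). a < b \<and> b < n}. tensor_scale (X a b) (sym_unit a b))
      + (\<Sum>a<n-1. tensor_scale (X a a) (diag_unit n a))) i j"
    unfolding plus_fun_apply sum_sym_unit_apply sum_diag_unit_apply tr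
    by cases (use sym out assms(1) in auto)
qed

lemma S20_spanned:
  assumes "n \<ge> 1"
  shows "\<exists>B. finite B \<and> card B \<le> dimS20 n \<and> S20 n \<subseteq> module.span tensor_scale B"
proof -
  interpret vector_space tensor_scale by (rule vector_space_tensor_scale)
  define P where "P = {(a, b). a < b \<and> b < (n::nat)}"
  define B where "B = (\<lambda>(a, b). sym_unit a b) ` P \<union> diag_unit n ` {..<n-1}"
  have "card B \<le> card ((\<lambda>(a, b). sym_unit a b) ` P) + card (diag_unit n ` {..<n-1})"
    unfolding B_def by (rule card_Un_le)
  also have "\<dots> \<le> card P + (n - 1)"
  proof (rule add_mono)
    show "card ((\<lambda>(a, b). sym_unit a b) ` P) \<le> card P"
      by (rule card_image_le) (simp add: P_def finite_strict_pairs)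
    show "card (diag_unit n ` {..<n-1}) \<le> n - 1"
      using card_image_le[of "{..<n-1}" "diag_unit n"] by simp
  qed
  also have "\<dots> = dimS20 n"
    unfolding P_def card_strict_pairs dimS20_eq[OF assms] ..
  finally have "card B \<le> dimS20 n" .
  moreover have "S20 n \<subseteq> span B"
  proof
    have sym_unit_span: "sym_unit a b \<in> span B" if "(a, b) \<in> P" for a b
      using that unfolding B_def by (intro span_base UnI1 rev_image_eqI[of "(a, b)"]) auto
    have diag_unit_span: "diag_unit n a \<in> span B" if "a < n - 1" for a
      using that unfolding B_def by (intro span_base UnI2 imageI) auto
    fix X assume "X \<in> S20 n"
    then have "X = (\<Sum>(a, b)\<in>P. tensor_scale (X a b) (sym_unit a b))
        + (\<Sum>a<n-1. tensor_scale (X a a) (diag_unit n a))"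
      unfolding P_def by (rule S20_decomposition[OF assms])
    also have "\<dots> \<in> span B"
      by (intro span_add span_sum) (auto intro!: span_scale sym_unit_span diag_unit_span)
    finally show "X \<in> span B" .
  qed
  moreover have "finite B" unfolding B_def P_def using finite_strict_pairs by simp
  ultimately show ?thesis by blast
qed

lemma S20_diff: "x \<in> S20 n \<Longrightarrow> y \<in> S20 n \<Longrightarrow> x - y \<in> S20 n"
  by (auto simp: S20_def sum_subtractf)

lemma S20_scale: "x \<in> S20 n \<Longrightarrow> tensor_scale c x \<in> S20 n"
  by (auto simp: S20_def tensor_scale_def sum_distrib_left[symmetric])

lemma S20_sum: "finite A \<Longrightarrow> (\<And>a. a \<in> A \<Longrightarrow> f a \<in> S20 n) \<Longrightarrow> sum f A \<in> S20 n"
proof -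
  assume "\<And>a. a \<in> A \<Longrightarrow> f a \<in> S20 n"
  moreover from this have "(\<Sum>i<n. \<Sum>a\<in>A. f a i i) = 0"
    by (subst sum.swap) (auto simp: S20_def intro!: sum.neutral)
  ultimately show ?thesis
    by (auto simp: S20_def sum_apply intro!: sum.neutral sum.cong)
qed

lemma tensor_inner_commute: "tensor_inner n x y = tensor_inner n y x"
  by (simp add: tensor_inner_def algebra_simps)

lemma tensor_inner_add_left:
  "tensor_inner n (\<lambda>i j. h1 i j + h2 i j) k = tensor_inner n h1 k + tensor_inner n h2 k"
  unfolding tensor_inner_def by (simp add: algebra_simps sum.distrib)

lemma tensor_inner_diff_left:
  "tensor_inner n (\<lambda>i j. h1 i j - h2 i j) k = tensor_inner n h1 k - tensor_inner n h2 k"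
  unfolding tensor_inner_def by (simp add: algebra_simps sum_subtractf)

lemma tensor_inner_scale_left: "tensor_inner n (\<lambda>i j. c * h i j) k = c * tensor_inner n h k"
  unfolding tensor_inner_def by (simp add: sum_distrib_left algebra_simps)

lemma tensor_inner_sum_left:
  "tensor_inner n (\<lambda>i j. \<Sum>m\<in>M. h m i j) k = (\<Sum>m\<in>M. tensor_inner n (h m) k)"
  unfolding tensor_inner_def sum_distrib_right by (rule sum_reorder_3[symmetric])

lemma tensor_inner_add_right:
  "tensor_inner n k (\<lambda>i j. h1 i j + h2 i j) = tensor_inner n k h1 + tensor_inner n k h2"
  unfolding tensor_inner_def by (simp add: algebra_simps sum.distrib)

lemma tensor_inner_diff_right:
  "tensor_inner n k (\<lambda>i j. h1 i j - h2 i j) = tensor_inner n k h1 - tensor_inner n k h2"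
  unfolding tensor_inner_def by (simp add: algebra_simps sum_subtractf)

lemma tensor_inner_scale_right: "tensor_inner n k (\<lambda>i j. c * h i j) = c * tensor_inner n k h"
  unfolding tensor_inner_def by (simp add: sum_distrib_left algebra_simps)

lemma tensor_inner_sum_right:
  "tensor_inner n k (\<lambda>i j. \<Sum>m\<in>M. h m i j) = (\<Sum>m\<in>M. tensor_inner n k (h m))"
  unfolding tensor_inner_def sum_distrib_left by (rule sum_reorder_3[symmetric])

lemma tensor_inner_self_eq_0: "x \<in> S20 n \<Longrightarrow> tensor_inner n x x = 0 \<Longrightarrow> x = 0"
proof -
  assume x: "x \<in> S20 n" and "tensor_inner n x x = 0"
  then have "\<forall>i\<in>{..<n}. (\<Sum>j<n. x i j * x i j) = 0"
    unfolding tensor_inner_def by (subst (asm) sum_nonneg_eq_0_iff) (auto intro: sum_nonneg)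
  then have "\<forall>i<n. \<forall>j\<in>{..<n}. x i j * x i j = 0"
    by (auto simp: sum_nonneg_eq_0_iff)
  then show "x = 0" using x unfolding S20_def
    by (auto simp: fun_eq_iff) (metis lessThan_iff not_le)
qed

locale S20_orthonormal_basis =
  fixes n :: nat and E :: "nat \<Rightarrow> nat \<Rightarrow> nat \<Rightarrow> real"
  assumes n_pos: "n \<ge> 1"
    and E_S20: "\<And>a. a < dimS20 n \<Longrightarrow> E a \<in> S20 n"
    and E_orthonormal: "\<And>a b. a < dimS20 n \<Longrightarrow> b < dimS20 n \<Longrightarrow>
      tensor_inner n (E a) (E b) = (if a = b then 1 else 0)"
begin

lemma expansion:
  assumes "X \<in> S20 n"
  shows "X = (\<Sum>a<dimS20 n. tensor_scale (tensor_inner n X (E a)) (E a))"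
proof -
  obtain B where "finite B" "card B \<le> dimS20 n" "S20 n \<subseteq> module.span tensor_scale B"
    using S20_spanned[OF n_pos] by blast
  then show ?thesis
    by (intro orthonormal_expansion[OF vector_space_tensor_scale, where V = "S20 n"]
        tensor_inner_commute tensor_inner_self_eq_0 E_S20 E_orthonormal S20_diff S20_scale S20_sum assms)
       (auto simp: tensor_scale_def tensor_inner_add_left[unfolded plus_fun_def] tensor_inner_scale_left)
qed

lemma parseval_S20:
  assumes "X \<in> S20 n"
  shows "(\<Sum>a<dimS20 n. tensor_inner n X (E a) * tensor_inner n Y (E a)) = tensor_inner n X Y"
proof -
  have "tensor_inner n X Y = (\<Sum>a<dimS20 n. tensor_inner n X (E a) * tensor_inner n (E a) Y)"
    by (subst expansion[OF assms])
       (simp add: tensor_scale_def sum_apply[abs_def] tensor_inner_sum_left tensor_inner_scale_left)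
  then show ?thesis by (simp add: tensor_inner_commute)
qed

end

section \<open>Algebraic curvature tensors\<close>

locale curvature_tensor =
  fixes n :: nat and R :: "nat \<Rightarrow> nat \<Rightarrow> nat \<Rightarrow> nat \<Rightarrow> real"
  assumes alg_curv: "alg_curv_tensor n R"
begin

lemma R_swap12: "a < n \<Longrightarrow> b < n \<Longrightarrow> c < n \<Longrightarrow> d < n \<Longrightarrow> R b a c d = - R a b c d"
  using alg_curv unfolding alg_curv_tensor_def by metis

lemma R_swap34: "a < n \<Longrightarrow> b < n \<Longrightarrow> c < n \<Longrightarrow> d < n \<Longrightarrow> R a b d c = - R a b c d"
  using alg_curv unfolding alg_curv_tensor_def by (metis minus_equation_iff)

lemma tensor4_swap12: "tensor4 n R y x z w = - tensor4 n R x y z w"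
proof -
  have "tensor4 n R y x z w = (\<Sum>a<n. \<Sum>b<n. \<Sum>c<n. \<Sum>d<n. R b a c d * y b * x a * z c * w d)"
    unfolding tensor4_def by (rule sum.swap)
  also have "\<dots> = (\<Sum>a<n. \<Sum>b<n. \<Sum>c<n. \<Sum>d<n. - (R a b c d * x a * y b * z c * w d))"
    by (rule sum_lessThan4_cong) (subst R_swap12, auto)
  finally show ?thesis unfolding tensor4_def by (simp add: sum_negf)
qed

lemma tensor4_swap34: "tensor4 n R x y w z = - tensor4 n R x y z w"
proof -
  have "tensor4 n R x y w z = (\<Sum>a<n. \<Sum>b<n. \<Sum>c<n. \<Sum>d<n. R a b d c * x a * y b * w d * z c)"
    unfolding tensor4_def by (intro sum.cong refl sum.swap)
  also have "\<dots> = (\<Sum>a<n. \<Sum>b<n. \<Sum>c<n. \<Sum>d<n. - (R a b c d * x a * y b * z c * w d))"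
    by (rule sum_lessThan4_cong) (subst R_swap34, auto)
  finally show ?thesis unfolding tensor4_def by (simp add: sum_negf)
qed

lemma tensor4_swap_both: "tensor4 n R y x w z = tensor4 n R x y z w"
  unfolding tensor4_swap12[of y x w z] tensor4_swap34[of x y w z] by simp

lemma tensor4_same12: "tensor4 n R x x z w = 0"
  using tensor4_swap12[of x x z w] by linarith

lemma tensor4_same34: "tensor4 n R x y z z = 0"
  using tensor4_swap34[of x y z z] by linarith

end

definition outer :: "(nat \<Rightarrow> real) \<Rightarrow> (nat \<Rightarrow> real) \<Rightarrow> nat \<Rightarrow> nat \<Rightarrow> real" where
  "outer x y = (\<lambda>i j. x i * y j)"

definition kron :: "nat \<Rightarrow> nat \<Rightarrow> real" where
  "kron = (\<lambda>i j. if i = j then 1 else 0)"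

definition unit_vec :: "nat \<Rightarrow> nat \<Rightarrow> real" where
  "unit_vec k = (\<lambda>a. if a = k then 1 else 0)"

definition vec_inner :: "nat \<Rightarrow> (nat \<Rightarrow> real) \<Rightarrow> (nat \<Rightarrow> real) \<Rightarrow> real" where
  "vec_inner n x y = (\<Sum>a<n. x a * y a)"

text \<open>The symmetric bilinear form \<open>\<langle>Rbar h, k\<rangle>\<close>, which agrees with \<open>\<langle>Rring h, k\<rangle>\<close> on traceless \<open>k\<close>.\<close>
definition curv_form :: "nat \<Rightarrow> (nat \<Rightarrow> nat \<Rightarrow> nat \<Rightarrow> nat \<Rightarrow> real) \<Rightarrow>
    (nat \<Rightarrow> nat \<Rightarrow> real) \<Rightarrow> (nat \<Rightarrow> nat \<Rightarrow> real) \<Rightarrow> real" where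
  "curv_form n R h k = tensor_inner n (Rbar n R h) k"

lemma curv_form_expand:
  "curv_form n R h k = (\<Sum>i<n. \<Sum>j<n. \<Sum>a<n. \<Sum>b<n. R i a b j * h a b * k i j)"
  unfolding curv_form_def tensor_inner_def Rbar_def by (simp add: sum_distrib_right)

lemma curv_form_cong:
  "(\<And>i j. i < n \<Longrightarrow> j < n \<Longrightarrow> h i j = h' i j) \<Longrightarrow> (\<And>i j. i < n \<Longrightarrow> j < n \<Longrightarrow> k i j = k' i j) \<Longrightarrow>
   curv_form n R h k = curv_form n R h' k'"
  unfolding curv_form_expand by (intro sum.cong refl) auto

lemma curv_form_add_left: "curv_form n R (\<lambda>i j. h1 i j + h2 i j) k = curv_form n R h1 k + curv_form n R h2 k"
  unfolding curv_form_expand by (simp add: algebra_simps sum.distrib)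

lemma curv_form_diff_left: "curv_form n R (\<lambda>i j. h1 i j - h2 i j) k = curv_form n R h1 k - curv_form n R h2 k"
  unfolding curv_form_expand by (simp add: algebra_simps sum_subtractf)

lemma curv_form_scale_left: "curv_form n R (\<lambda>i j. c * h i j) k = c * curv_form n R h k"
  unfolding curv_form_expand by (simp add: sum_distrib_left algebra_simps)

lemma curv_form_add_right: "curv_form n R k (\<lambda>i j. h1 i j + h2 i j) = curv_form n R k h1 + curv_form n R k h2"
  unfolding curv_form_expand by (simp add: algebra_simps sum.distrib)

lemma curv_form_diff_right: "curv_form n R k (\<lambda>i j. h1 i j - h2 i j) = curv_form n R k h1 - curv_form n R k h2"
  unfolding curv_form_expand by (simp add: algebra_simps sum_subtractf)

lemma curv_form_scale_right: "curv_form n R k (\<lambda>i j. c * h i j) = c * curv_form n R k h"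
  unfolding curv_form_expand by (simp add: sum_distrib_left algebra_simps)

lemma curv_form_sum_left:
  "curv_form n R (\<lambda>i j. \<Sum>m\<in>M. h m i j) k = (\<Sum>m\<in>M. curv_form n R (h m) k)"
  unfolding curv_form_expand sum_distrib_left sum_distrib_right by (rule sum_reorder_5[symmetric])

lemma curv_form_sum_right:
  "curv_form n R k (\<lambda>i j. \<Sum>m\<in>M. h m i j) = (\<Sum>m\<in>M. curv_form n R k (h m))"
  unfolding curv_form_expand sum_distrib_left by (rule sum_reorder_5[symmetric])

lemma curv_form_outer: "curv_form n R (outer x y) (outer z w) = tensor4 n R z x y w"
proof -
  have "curv_form n R (outer x y) (outer z w) = (\<Sum>i<n. \<Sum>j<n. \<Sum>a<n. \<Sum>b<n. R i a b j * z i * x a * y b * w j)"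
    unfolding curv_form_expand outer_def by (simp add: algebra_simps)
  also have "\<dots> = (\<Sum>i<n. \<Sum>a<n. \<Sum>b<n. \<Sum>j<n. R i a b j * z i * x a * y b * w j)"
    by (intro sum.cong refl sum_reorder_3)
  finally show ?thesis unfolding tensor4_def .
qed

lemma ricci_frame:
  assumes "\<And>b d. b < n \<Longrightarrow> d < n \<Longrightarrow> (\<Sum>k<n. u k b * u k d) = (if b = d then 1 else 0)"
  shows "(\<Sum>k<n. tensor4 n R x (u k) y (u k)) = (\<Sum>a<n. \<Sum>b<n. \<Sum>c<n. R a b c b * x a * y c)"
proof -
  have "(\<Sum>k<n. tensor4 n R x (u k) y (u k))
      = (\<Sum>a<n. \<Sum>b<n. \<Sum>c<n. \<Sum>d<n. \<Sum>k<n. R a b c d * x a * u k b * y c * u k d)"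
    unfolding tensor4_def by (rule sum_reorder_5)
  also have "\<dots> = (\<Sum>a<n. \<Sum>b<n. \<Sum>c<n. \<Sum>d<n. (R a b c d * x a * y c) * (\<Sum>k<n. u k b * u k d))"
    by (simp add: sum_distrib_left algebra_simps)
  also have "\<dots> = (\<Sum>a<n. \<Sum>b<n. \<Sum>c<n. \<Sum>d<n. (R a b c d * x a * y c) * (if d = b then 1 else 0))"
    using assms by (intro sum.cong refl) auto
  also have "\<dots> = (\<Sum>a<n. \<Sum>b<n. \<Sum>c<n. R a b c b * x a * y c)"
    by simp
  finally show ?thesis .
qed

lemma ricci_components: "ricci n R x y = (\<Sum>a<n. \<Sum>b<n. \<Sum>c<n. R a b c b * x a * y c)"
proof -
  have "ricci n R x y = (\<Sum>k<n. tensor4 n R x (unit_vec k) y (unit_vec k))"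
    unfolding ricci_def unit_vec_def by (simp add: eq_commute)
  also have "\<dots> = (\<Sum>a<n. \<Sum>b<n. \<Sum>c<n. R a b c b * x a * y c)"
    by (rule ricci_frame) (simp add: unit_vec_def)
  finally show ?thesis .
qed

lemma ricci_orthonormal_basis:
  "orthonormal_basis n e \<Longrightarrow> ricci n R x y = (\<Sum>k<n. tensor4 n R x (e k) y (e k))"
  unfolding ricci_components by (rule ricci_frame[symmetric]) (rule orthonormal_basis_columns)

definition scalar_curv :: "nat \<Rightarrow> (nat \<Rightarrow> nat \<Rightarrow> nat \<Rightarrow> nat \<Rightarrow> real) \<Rightarrow> real" where
  "scalar_curv n R = (\<Sum>m<n. ricci n R (unit_vec m) (unit_vec m))"

context curvature_tensor
begin

lemma curv_form_commute: "curv_form n R h k = curv_form n R k h"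
proof -
  have "curv_form n R k h = (\<Sum>i<n. \<Sum>j<n. \<Sum>a<n. \<Sum>b<n. R i a b j * k a b * h i j)"
    by (rule curv_form_expand)
  also have "\<dots> = (\<Sum>a<n. \<Sum>b<n. \<Sum>i<n. \<Sum>j<n. R i a b j * k a b * h i j)"
    by (rule sum_swap_pairs)
  also have "\<dots> = (\<Sum>a<n. \<Sum>b<n. \<Sum>i<n. \<Sum>j<n. R a i j b * h i j * k a b)"
  proof (rule sum_lessThan4_cong)
    fix a b i j assume "a < n" "b < n" "i < n" "j < n"
    then have "R i a b j = R a i j b" using R_swap12 R_swap34 by (metis minus_minus)
    then show "R i a b j * k a b * h i j = R a i j b * h i j * k a b" by simp
  qed
  finally show ?thesis unfolding curv_form_expand by simp
qed

lemma curv_form_kron_outer: "curv_form n R kron (outer z w) = - ricci n R z w"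
proof -
  have "curv_form n R kron (outer z w) = (\<Sum>i<n. \<Sum>j<n. \<Sum>a<n. R i a a j * z i * w j)"
    unfolding curv_form_expand outer_def kron_def
    by (simp add: if_distrib[of "\<lambda>x. _ * x"] if_distrib[of "\<lambda>x. x * _"] mult.assoc cong: if_cong)
  also have "\<dots> = (\<Sum>i<n. \<Sum>a<n. \<Sum>j<n. - (R i a j a * z i * w j))"
  proof (rule sum.cong[OF refl])
    fix i assume i: "i \<in> {..<n}"
    have "(\<Sum>j<n. \<Sum>a<n. R i a a j * z i * w j) = (\<Sum>a<n. \<Sum>j<n. R i a a j * z i * w j)"
      by (rule sum.swap)
    also have "\<dots> = (\<Sum>a<n. \<Sum>j<n. - (R i a j a * z i * w j))"
      using i by (intro sum.cong refl) (subst R_swap34, auto)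
    finally show "(\<Sum>j<n. \<Sum>a<n. R i a a j * z i * w j) = (\<Sum>a<n. \<Sum>j<n. - (R i a j a * z i * w j))" .
  qed
  finally show ?thesis unfolding ricci_components by (simp add: sum_negf)
qed

lemma curv_form_outer_kron: "curv_form n R (outer z w) kron = - ricci n R z w"
  by (subst curv_form_commute) (rule curv_form_kron_outer)

lemma curv_form_kron_kron: "curv_form n R kron kron = - scalar_curv n R"
proof -
  have "curv_form n R kron kron = curv_form n R kron (\<lambda>i j. \<Sum>m<n. outer (unit_vec m) (unit_vec m) i j)"
    by (rule curv_form_cong)
       (auto simp: kron_def outer_def unit_vec_def if_distrib[of "\<lambda>x. x * _"] cong: if_cong)
  also have "\<dots> = (\<Sum>m<n. - ricci n R (unit_vec m) (unit_vec m))"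
    by (simp add: curv_form_sum_right curv_form_kron_outer)
  finally show ?thesis by (simp add: scalar_curv_def sum_negf)
qed

lemma scalar_curv_orthonormal_basis:
  assumes "orthonormal_basis n e"
  shows "scalar_curv n R = (\<Sum>k<n. ricci n R (e k) (e k))"
proof -
  have "scalar_curv n R = (\<Sum>m<n. \<Sum>k<n. tensor4 n R (unit_vec m) (e k) (unit_vec m) (e k))"
    unfolding scalar_curv_def using ricci_orthonormal_basis[OF assms] by simp
  also have "\<dots> = (\<Sum>k<n. \<Sum>m<n. tensor4 n R (e k) (unit_vec m) (e k) (unit_vec m))"
    by (subst sum.swap) (intro sum.cong refl, rule tensor4_swap_both)
  also have "\<dots> = (\<Sum>k<n. ricci n R (e k) (e k))"
    unfolding ricci_def unit_vec_def by (simp add: eq_commute)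
  finally show ?thesis .
qed

end

section \<open>Eigenvalue expansion of the curvature operator\<close>

text \<open>Tensors built from an orthonormal basis need not vanish at indices \<open>\<ge> n\<close>, so they are
  not members of \<open>S20 n\<close>; only their entries below \<open>n\<close> matter.\<close>
definition sym_traceless :: "nat \<Rightarrow> (nat \<Rightarrow> nat \<Rightarrow> real) \<Rightarrow> bool" where
  "sym_traceless n X \<longleftrightarrow> (\<forall>i<n. \<forall>j<n. X i j = X j i) \<and> (\<Sum>i<n. X i i) = 0"

lemma S20_imp_sym_traceless: "X \<in> S20 n \<Longrightarrow> sym_traceless n X"
  by (simp add: S20_def sym_traceless_def)

lemma tensor_inner_Rring:
  "(\<Sum>i<n. phi i i) = 0 \<Longrightarrow> tensor_inner n phi (Rring n R h) = tensor_inner n phi (Rbar n R h)"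
proof -
  assume tr: "(\<Sum>i<n. phi i i) = 0"
  let ?t = "(\<Sum>k<n. Rbar n R h k k) / real n"
  have "tensor_inner n phi (Rring n R h)
      = (\<Sum>i<n. \<Sum>j<n. phi i j * Rbar n R h i j - (if i = j then phi i i * ?t else 0))"
    unfolding tensor_inner_def Rring_def by (intro sum.cong refl) (auto simp: algebra_simps)
  also have "\<dots> = tensor_inner n phi (Rbar n R h) - (\<Sum>i<n. phi i i) * ?t"
    unfolding tensor_inner_def sum_subtractf by (simp add: sum_distrib_right sum_divide_distrib)
  finally show ?thesis using tr by simp
qed

context S20_orthonormal_basis
begin

lemma parseval:
  assumes "sym_traceless n X"
  shows "(\<Sum>a<dimS20 n. tensor_inner n X (E a) * tensor_inner n Y (E a)) = tensor_inner n X Y"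
proof -
  define X' where "X' = (\<lambda>i j. if i < n \<and> j < n then X i j else 0)"
  have X': "X' \<in> S20 n" using assms by (auto simp: S20_def sym_traceless_def X'_def)
  have "tensor_inner n X' Z = tensor_inner n X Z" for Z by (simp add: tensor_inner_def X'_def)
  then show ?thesis using parseval_S20[OF X'] by simp
qed

lemma sum_coeff_sq: "sym_traceless n X \<Longrightarrow> (\<Sum>a<dimS20 n. (tensor_inner n X (E a))\<^sup>2) = tensor_inner n X X"
  using parseval[of X X] by (simp add: power2_eq_square)

end

locale curvature_eigenbasis = S20_orthonormal_basis n E + curvature_tensor n R
  for n E R +
  fixes lam :: "nat \<Rightarrow> real"
  assumes eigen: "\<And>a. a < dimS20 n \<Longrightarrow> Rring n R (E a) = (\<lambda>i j. lam a * E a i j)"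
begin

lemma sum_eigen_coeff_sq:
  assumes phi: "sym_traceless n phi"
  shows "(\<Sum>a<dimS20 n. lam a * (tensor_inner n phi (E a))\<^sup>2) = curv_form n R phi phi"
proof -
  have tr: "(\<Sum>i<n. phi i i) = 0" using phi by (simp add: sym_traceless_def)
  have coeff: "lam a * tensor_inner n phi (E a) = tensor_inner n (Rbar n R phi) (E a)"
    if a: "a < dimS20 n" for a
  proof -
    have "lam a * tensor_inner n phi (E a) = tensor_inner n phi (Rring n R (E a))"
      unfolding eigen[OF a] tensor_inner_def by (simp add: sum_distrib_left algebra_simps)
    also have "\<dots> = tensor_inner n phi (Rbar n R (E a))" by (rule tensor_inner_Rring[where phi = phi, OF tr])
    also have "\<dots> = curv_form n R (E a) phi" unfolding curv_form_def by (rule tensor_inner_commute)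
    also have "\<dots> = curv_form n R phi (E a)" by (rule curv_form_commute)
    finally show ?thesis unfolding curv_form_def .
  qed
  have "(\<Sum>a<dimS20 n. lam a * (tensor_inner n phi (E a))\<^sup>2)
      = (\<Sum>a<dimS20 n. tensor_inner n phi (E a) * tensor_inner n (Rbar n R phi) (E a))"
    by (intro sum.cong refl) (simp add: power2_eq_square coeff[symmetric])
  also have "\<dots> = tensor_inner n phi (Rbar n R phi)" by (rule parseval[OF phi])
  finally show ?thesis unfolding curv_form_def by (simp add: tensor_inner_commute)
qed

end

section \<open>Test tensors\<close>

definition sym_outer :: "(nat \<Rightarrow> real) \<Rightarrow> (nat \<Rightarrow> real) \<Rightarrow> nat \<Rightarrow> nat \<Rightarrow> real" where
  "sym_outer u v = (\<lambda>i j. outer u v i j + outer v u i j)"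

definition traceless_outer :: "nat \<Rightarrow> (nat \<Rightarrow> real) \<Rightarrow> nat \<Rightarrow> nat \<Rightarrow> real" where
  "traceless_outer n u = (\<lambda>i j. outer u u i j - 1 / real n * kron i j)"

definition tail_proj :: "nat \<Rightarrow> (nat \<Rightarrow> nat \<Rightarrow> real) \<Rightarrow> nat \<Rightarrow> nat \<Rightarrow> nat \<Rightarrow> real" where
  "tail_proj n e p = (\<lambda>i j. \<Sum>k\<in>{p..<n}. outer (e k) (e k) i j)"

definition traceless_tail_proj :: "nat \<Rightarrow> (nat \<Rightarrow> nat \<Rightarrow> real) \<Rightarrow> nat \<Rightarrow> nat \<Rightarrow> nat \<Rightarrow> real" where
  "traceless_tail_proj n e p = (\<lambda>i j. tail_proj n e p i j - real (n - p) / real n * kron i j)"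

lemma tensor_inner_outer_outer: "tensor_inner n (outer x y) (outer z w) = vec_inner n x z * vec_inner n y w"
  unfolding tensor_inner_def outer_def vec_inner_def sum_product
  by (intro sum.cong refl) (simp add: algebra_simps)

lemma tensor_inner_kron_left: "tensor_inner n kron h = (\<Sum>i<n. h i i)"
  unfolding tensor_inner_def kron_def by (simp add: if_distrib[of "\<lambda>x. x * _"] cong: if_cong)

lemma tensor_inner_outer_kron: "tensor_inner n (outer x y) kron = vec_inner n x y"
  by (subst tensor_inner_commute) (simp add: tensor_inner_kron_left outer_def vec_inner_def)

lemma tensor_inner_kron_kron: "tensor_inner n kron kron = real n"
  unfolding tensor_inner_kron_left by (simp add: kron_def)

lemma vec_inner_basis:
  "orthonormal_basis n e \<Longrightarrow> i < n \<Longrightarrow> j < n \<Longrightarrow> vec_inner n (e i) (e j) = (if i = j then 1 else 0)"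
  unfolding orthonormal_basis_def vec_inner_def by auto

context
  fixes n :: nat and e :: "nat \<Rightarrow> nat \<Rightarrow> real"
  assumes onb: "orthonormal_basis n e"
begin

lemma sym_traceless_sym_outer:
  assumes "i < n" "j < n" "i \<noteq> j"
  shows "sym_traceless n (sym_outer (e i) (e j))"
proof -
  have "(\<Sum>a<n. sym_outer (e i) (e j) a a) = 2 * vec_inner n (e i) (e j)"
    unfolding sym_outer_def outer_def vec_inner_def by (simp add: sum_distrib_left algebra_simps)
  then show ?thesis
    using vec_inner_basis[OF onb assms(1,2)] assms(3)
    unfolding sym_traceless_def by (auto simp: sym_outer_def outer_def)
qed

lemma sym_traceless_traceless_outer:
  assumes "i < n"
  shows "sym_traceless n (traceless_outer n (e i))"
  using vec_inner_basis[OF onb assms assms] assms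
  unfolding sym_traceless_def traceless_outer_def outer_def kron_def vec_inner_def
  by (auto simp: sum_subtractf)

lemma sym_traceless_traceless_tail_proj: "sym_traceless n (traceless_tail_proj n e p)"
proof -
  have "(\<Sum>i<n. tail_proj n e p i i) = (\<Sum>k\<in>{p..<n}. vec_inner n (e k) (e k))"
    unfolding tail_proj_def outer_def vec_inner_def by (rule sum.swap)
  also have "\<dots> = real (n - p)" by (simp add: vec_inner_basis[OF onb])
  finally have "(\<Sum>i<n. tail_proj n e p i i) = real (n - p)" .
  then have "(\<Sum>i<n. traceless_tail_proj n e p i i) = 0"
    unfolding traceless_tail_proj_def kron_def by (cases "n = 0") (simp_all add: sum_subtractf)
  moreover have "traceless_tail_proj n e p i j = traceless_tail_proj n e p j i" for i j
    unfolding traceless_tail_proj_def tail_proj_def outer_def kron_def by (simp add: mult.commute)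
  ultimately show ?thesis unfolding sym_traceless_def by auto
qed

lemma norm_sym_outer:
  "i < n \<Longrightarrow> j < n \<Longrightarrow> i \<noteq> j \<Longrightarrow> tensor_inner n (sym_outer (e i) (e j)) (sym_outer (e i) (e j)) = 2"
  unfolding sym_outer_def tensor_inner_add_left tensor_inner_add_right tensor_inner_outer_outer
  by (simp add: vec_inner_basis[OF onb])

lemma norm_traceless_outer:
  "i < n \<Longrightarrow> tensor_inner n (traceless_outer n (e i)) (traceless_outer n (e i)) = 1 - 1 / real n"
  unfolding traceless_outer_def tensor_inner_diff_left tensor_inner_diff_right
    tensor_inner_scale_left tensor_inner_scale_right tensor_inner_outer_outer
    tensor_inner_outer_kron tensor_inner_kron_kron
  by (subst tensor_inner_commute) (simp add: tensor_inner_outer_kron vec_inner_basis[OF onb] field_simps)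

lemma norm_traceless_tail_proj:
  "tensor_inner n (traceless_tail_proj n e p) (traceless_tail_proj n e p) = real (n - p) * real p / real n"
proof -
  have tail_tail: "tensor_inner n (tail_proj n e p) (tail_proj n e p) = real (n - p)"
    unfolding tail_proj_def tensor_inner_sum_left tensor_inner_sum_right tensor_inner_outer_outer
    by (simp add: vec_inner_basis[OF onb] if_distrib[of "\<lambda>x. x * _"] cong: if_cong)
  have tail_kron: "tensor_inner n (tail_proj n e p) kron = real (n - p)"
    unfolding tail_proj_def tensor_inner_sum_left tensor_inner_outer_kron
    by (simp add: vec_inner_basis[OF onb])
  have "tensor_inner n (traceless_tail_proj n e p) (traceless_tail_proj n e p)
      = real (n - p) - 2 * (real (n - p) / real n) * real (n - p) + (real (n - p) / real n)\<^sup>2 * real n"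
    unfolding traceless_tail_proj_def tensor_inner_diff_left tensor_inner_diff_right
      tensor_inner_scale_left tensor_inner_scale_right tail_tail tail_kron tensor_inner_kron_kron
    by (subst tensor_inner_commute, unfold tail_kron) (simp add: power2_eq_square algebra_simps)
  also have "\<dots> = real (n - p) * real p / real n"
    by (cases "p \<le> n"; cases "n = 0") (simp_all add: of_nat_diff field_simps power2_eq_square)
  finally show ?thesis .
qed

end

context curvature_tensor
begin

lemma curv_form_sym_outer: "curv_form n R (sym_outer u v) (sym_outer u v) = 2 * tensor4 n R u v u v"
  unfolding sym_outer_def curv_form_add_left curv_form_add_right curv_form_outer
  using tensor4_same12 tensor4_same34 tensor4_swap_both[of u v u v] by simp

lemma curv_form_traceless_outer:
  "curv_form n R (traceless_outer n u) (traceless_outer n u)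
    = 2 / real n * ricci n R u u - scalar_curv n R / (real n)\<^sup>2"
  unfolding traceless_outer_def curv_form_diff_left curv_form_diff_right curv_form_scale_left
    curv_form_scale_right curv_form_outer curv_form_outer_kron curv_form_kron_outer curv_form_kron_kron
  using tensor4_same12 by (simp add: power2_eq_square field_simps)

lemma curv_form_traceless_tail_proj:
  "curv_form n R (traceless_tail_proj n e p) (traceless_tail_proj n e p)
    = - (\<Sum>k\<in>{p..<n}. \<Sum>l\<in>{p..<n}. tensor4 n R (e k) (e l) (e k) (e l))
      + 2 * (real (n - p) / real n) * (\<Sum>k\<in>{p..<n}. ricci n R (e k) (e k))
      - (real (n - p) / real n)\<^sup>2 * scalar_curv n R"
proof -
  have "curv_form n R (tail_proj n e p) (tail_proj n e p)
      = (\<Sum>k\<in>{p..<n}. \<Sum>l\<in>{p..<n}. - tensor4 n R (e k) (e l) (e k) (e l))"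
    unfolding tail_proj_def curv_form_sum_left curv_form_sum_right curv_form_outer
    by (intro sum.cong refl tensor4_swap12)
  then have tail_tail: "curv_form n R (tail_proj n e p) (tail_proj n e p)
      = - (\<Sum>k\<in>{p..<n}. \<Sum>l\<in>{p..<n}. tensor4 n R (e k) (e l) (e k) (e l))"
    by (simp add: sum_negf)
  have tail_kron: "curv_form n R (tail_proj n e p) kron = - (\<Sum>k\<in>{p..<n}. ricci n R (e k) (e k))"
    unfolding tail_proj_def curv_form_sum_left curv_form_outer_kron by (simp add: sum_negf)
  have kron_tail: "curv_form n R kron (tail_proj n e p) = - (\<Sum>k\<in>{p..<n}. ricci n R (e k) (e k))"
    by (subst curv_form_commute) (rule tail_kron)
  show ?thesis
    unfolding traceless_tail_proj_def curv_form_diff_left curv_form_diff_right curv_form_scale_left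
      curv_form_scale_right tail_tail tail_kron kron_tail curv_form_kron_kron
    by (simp add: power2_eq_square algebra_simps)
qed

end

definition basis_coeff :: "nat \<Rightarrow> (nat \<Rightarrow> nat \<Rightarrow> real) \<Rightarrow> (nat \<Rightarrow> nat \<Rightarrow> real) \<Rightarrow> nat \<Rightarrow> nat \<Rightarrow> real" where
  "basis_coeff n e h i j = tensor_inner n (outer (e i) (e j)) h"

lemma basis_coeff_commute:
  assumes "sym_traceless n h"
  shows "basis_coeff n e h j i = basis_coeff n e h i j"
proof -
  have "basis_coeff n e h j i = (\<Sum>a<n. \<Sum>b<n. e j a * e i b * h b a)"
    unfolding basis_coeff_def tensor_inner_def outer_def
    using assms by (intro sum.cong refl) (auto simp: sym_traceless_def)
  also have "\<dots> = (\<Sum>b<n. \<Sum>a<n. e j a * e i b * h b a)" by (rule sum.swap)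
  also have "\<dots> = basis_coeff n e h i j"
    unfolding basis_coeff_def tensor_inner_def outer_def by (intro sum.cong refl) (simp add: algebra_simps)
  finally show ?thesis .
qed

lemma sum_basis_coeff_sq:
  assumes onb: "orthonormal_basis n e"
  shows "(\<Sum>i<n. \<Sum>j<n. (basis_coeff n e h i j)\<^sup>2) = tensor_inner n h h"
proof -
  define G where "G i b = (\<Sum>a<n. h a b * e i a)" for i b
  have coeff: "basis_coeff n e h i j = (\<Sum>b<n. G i b * e j b)" for i j
  proof -
    have "basis_coeff n e h i j = (\<Sum>a<n. \<Sum>b<n. h a b * e i a * e j b)"
      unfolding basis_coeff_def tensor_inner_def outer_def by (simp add: algebra_simps)
    also have "\<dots> = (\<Sum>b<n. \<Sum>a<n. h a b * e i a * e j b)" by (rule sum.swap)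
    finally show ?thesis unfolding G_def by (simp add: sum_distrib_right)
  qed
  have "(\<Sum>i<n. \<Sum>j<n. (basis_coeff n e h i j)\<^sup>2) = (\<Sum>i<n. \<Sum>b<n. (G i b)\<^sup>2)"
    unfolding coeff by (intro sum.cong refl orthonormal_basis_sum_squares[OF onb])
  also have "\<dots> = (\<Sum>b<n. \<Sum>i<n. (G i b)\<^sup>2)" by (rule sum.swap)
  also have "\<dots> = (\<Sum>b<n. \<Sum>a<n. (h a b)\<^sup>2)"
    unfolding G_def by (intro sum.cong refl orthonormal_basis_sum_squares[OF onb])
  also have "\<dots> = tensor_inner n h h"
    unfolding tensor_inner_def power2_eq_square by (rule sum.swap)
  finally show ?thesis .
qed

context
  fixes n :: nat and e :: "nat \<Rightarrow> nat \<Rightarrow> real" and h :: "nat \<Rightarrow> nat \<Rightarrow> real"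
  assumes h: "sym_traceless n h"
begin

lemma tensor_inner_sym_outer_basis:
  "tensor_inner n (sym_outer (e i) (e j)) h = 2 * basis_coeff n e h i j"
  using basis_coeff_commute[OF h, of e i j]
  unfolding sym_outer_def tensor_inner_add_left basis_coeff_def by simp

lemma tensor_inner_traceless_outer_basis:
  "tensor_inner n (traceless_outer n (e i)) h = basis_coeff n e h i i"
  using h unfolding traceless_outer_def tensor_inner_diff_left tensor_inner_scale_left
    tensor_inner_kron_left basis_coeff_def sym_traceless_def by simp

lemma tensor_inner_traceless_tail_proj_basis:
  "tensor_inner n (traceless_tail_proj n e p) h = (\<Sum>k\<in>{p..<n}. basis_coeff n e h k k)"
  using h unfolding traceless_tail_proj_def tail_proj_def tensor_inner_diff_left
    tensor_inner_scale_left tensor_inner_sum_left tensor_inner_kron_left basis_coeff_def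
    sym_traceless_def by simp

end

lemma sum_sq_test_tensors:
  assumes "orthonormal_basis n e" "sym_traceless n h"
  shows "(\<Sum>i<n. \<Sum>j\<in>{..<n}-{i}. 1/4 * (tensor_inner n (sym_outer (e i) (e j)) h)\<^sup>2)
       + (\<Sum>i<n. (tensor_inner n (traceless_outer n (e i)) h)\<^sup>2) = tensor_inner n h h"
proof -
  have "(\<Sum>i<n. \<Sum>j\<in>{..<n}-{i}. 1/4 * (tensor_inner n (sym_outer (e i) (e j)) h)\<^sup>2)
       + (\<Sum>i<n. (tensor_inner n (traceless_outer n (e i)) h)\<^sup>2)
      = (\<Sum>i<n. (\<Sum>j\<in>{..<n}-{i}. (basis_coeff n e h i j)\<^sup>2) + (basis_coeff n e h i i)\<^sup>2)"
    unfolding tensor_inner_sym_outer_basis[OF assms(2)] tensor_inner_traceless_outer_basis[OF assms(2)]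
    by (simp add: sum.distrib power_mult_distrib)
  also have "\<dots> = (\<Sum>i<n. \<Sum>j<n. (basis_coeff n e h i j)\<^sup>2)"
    by (intro sum.cong refl) (simp add: sum.remove[of "{..<n}"])
  finally show ?thesis unfolding sum_basis_coeff_sq[OF assms(1)] .
qed

section \<open>Partial sums of sorted eigenvalues\<close>

text \<open>Ky Fan's principle in its elementary form: among weights \<open>0 \<le> d\<^sub>a \<le> 1\<close> of total mass
  \<open>\<alpha>\<close>, the weighted sum \<open>\<Sum> lam\<^sub>a d\<^sub>a\<close> is least when the mass sits on the smallest values.\<close>
lemma eig_partial_sum_le:
  fixes lam d :: "nat \<Rightarrow> real" and N :: nat and \<alpha> :: real
  assumes sorted: "\<And>a b. a \<le> b \<Longrightarrow> b < N \<Longrightarrow> lam a \<le> lam b"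
    and d0: "\<And>a. a < N \<Longrightarrow> 0 \<le> d a" and d1: "\<And>a. a < N \<Longrightarrow> d a \<le> 1"
    and sum_d: "(\<Sum>a<N. d a) = \<alpha>" and \<alpha>_nonneg: "0 \<le> \<alpha>" and \<alpha>_less: "\<alpha> < real N"
  shows "eig_partial_sum lam \<alpha> \<le> (\<Sum>a<N. lam a * d a)"
proof -
  define k where "k = nat \<lfloor>\<alpha>\<rfloor>"
  define f where "f = \<alpha> - of_int \<lfloor>\<alpha>\<rfloor>"
  have k_floor: "real k = of_int \<lfloor>\<alpha>\<rfloor>" unfolding k_def using \<alpha>_nonneg by simp
  have "real k \<le> \<alpha>" using k_floor by linarith
  then have kN: "k < N" using \<alpha>_less by linarith
  define c where "c a = (if a < k then 1 else if a = k then f else 0)" for a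
  have split: "(\<Sum>a<N. g a) = (\<Sum>a<k. g a) + g k + (\<Sum>a\<in>{Suc k..<N}. g a)" for g :: "nat \<Rightarrow> real"
    using kN by (simp add: sum_lessThan_split[of k N] sum.atLeast_Suc_lessThan)
  have sum_c: "(\<Sum>a<N. c a) = \<alpha>"
    unfolding split[of c] unfolding c_def using k_floor f_def by simp
  have partial_sum: "eig_partial_sum lam \<alpha> = (\<Sum>a<N. lam a * c a)"
    unfolding split[of "\<lambda>a. lam a * c a"] eig_partial_sum_def k_def[symmetric] f_def[symmetric]
    by (simp add: c_def)
  have "lam k * (d a - c a) \<le> lam a * (d a - c a)" if a: "a < N" for a
  proof (cases a k rule: linorder_cases)
    case less
    then have "d a - c a \<le> 0" using d1[OF a] by (simp add: c_def)
    moreover have "lam a \<le> lam k" using sorted[of a k] less kN by simp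
    ultimately show ?thesis by (simp add: mult_right_mono_neg)
  next
    case greater
    then have "0 \<le> d a - c a" using d0[OF a] by (simp add: c_def)
    moreover have "lam k \<le> lam a" using sorted[of k a] greater a by simp
    ultimately show ?thesis by (simp add: mult_right_mono)
  qed simp
  then have "(\<Sum>a<N. lam k * (d a - c a)) \<le> (\<Sum>a<N. lam a * (d a - c a))"
    by (intro sum_mono) simp
  moreover have "(\<Sum>a<N. lam k * (d a - c a)) = 0"
    by (simp add: sum_distrib_left[symmetric] sum_subtractf sum_d sum_c)
  ultimately show ?thesis
    unfolding partial_sum by (simp add: sum_subtractf algebra_simps)
qed

lemma cone_rearrange:
  fixes m n p S SR \<theta> :: real
  assumes "0 < m" "1 < n"
    and "- \<theta> * (S / (n * (n - 1))) * ((n - 1) * p / 2)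
          \<le> (m + 2) / (2 * (m + 1)) * SR - p * S / (2 * n * (m + 1))"
  shows "(n - 1) * p / (m + 2) * (1 - (m + 1) * \<theta>) * (S / (n * (n - 1))) \<le> SR"
proof -
  have c: "0 < (m + 2) / (2 * (m + 1))" using assms(1) by simp
  have "(n - 1) * p / (m + 2) * (1 - (m + 1) * \<theta>) * (S / (n * (n - 1)))
      = (p * S / (2 * n * (m + 1)) - \<theta> * (S / (n * (n - 1))) * ((n - 1) * p / 2))
        / ((m + 2) / (2 * (m + 1)))"
    using assms(1,2) by (simp add: divide_simps) algebra
  also have "\<dots> \<le> SR"
    unfolding pos_divide_le_eq[OF c] mult.commute[of SR] using assms(3) by linarith
  finally show ?thesis .
qed

locale partial_ricci = curvature_eigenbasis n E R lam for n E R lam +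
  fixes e :: "nat \<Rightarrow> nat \<Rightarrow> real" and p :: nat
  assumes onb: "orthonormal_basis n e" and p_pos: "0 < p" and p_less: "p < n"
begin

definition sec :: "nat \<Rightarrow> nat \<Rightarrow> real" where
  "sec i j = tensor4 n R (e i) (e j) (e i) (e j)"

definition ric :: "nat \<Rightarrow> real" where
  "ric i = ricci n R (e i) (e i)"

lemma ric_eq_sum_sec: "ric i = (\<Sum>k<n. sec i k)"
  unfolding ric_def sec_def by (rule ricci_orthonormal_basis[OF onb])

lemma sec_commute: "sec i j = sec j i"
  unfolding sec_def by (rule tensor4_swap_both[symmetric])

lemma sec_same: "sec i i = 0"
  unfolding sec_def by (rule tensor4_same12)

lemma scalar_curv_eq_sum_ric: "scalar_curv n R = (\<Sum>k<n. ric k)"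
  unfolding ric_def by (rule scalar_curv_orthonormal_basis[OF onb])

lemma sum_sec_off_diag: "i < n \<Longrightarrow> (\<Sum>j\<in>{..<n}-{i}. sec i j) = ric i"
  unfolding ric_eq_sum_sec by (simp add: sum_diff1 sec_same)

lemma E_sym_traceless: "a < dimS20 n \<Longrightarrow> sym_traceless n (E a)"
  by (rule S20_imp_sym_traceless[OF E_S20])

lemma norm_E: "a < dimS20 n \<Longrightarrow> tensor_inner n (E a) (E a) = 1"
  by (simp add: E_orthonormal)

definition weighted_coeff_sq :: "(nat \<Rightarrow> real) \<Rightarrow> (nat \<Rightarrow> nat \<Rightarrow> real) \<Rightarrow> real" where
  "weighted_coeff_sq g phi = (\<Sum>a<dimS20 n. g a * (tensor_inner n phi (E a))\<^sup>2)"

lemma weighted_coeff_sq_one: "sym_traceless n phi \<Longrightarrow> weighted_coeff_sq (\<lambda>_. 1) phi = tensor_inner n phi phi"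
  unfolding weighted_coeff_sq_def by (simp add: sum_coeff_sq)

lemma weighted_coeff_sq_eigen: "sym_traceless n phi \<Longrightarrow> weighted_coeff_sq lam phi = curv_form n R phi phi"
  unfolding weighted_coeff_sq_def by (rule sum_eigen_coeff_sq)

lemma sym_traceless_tests:
  shows "i < n \<Longrightarrow> j < n \<Longrightarrow> i \<noteq> j \<Longrightarrow> sym_traceless n (sym_outer (e i) (e j))"
    and "i < n \<Longrightarrow> sym_traceless n (traceless_outer n (e i))"
    and "sym_traceless n (traceless_tail_proj n e p)"
  by (simp_all add: sym_traceless_sym_outer[OF onb] sym_traceless_traceless_outer[OF onb]
      sym_traceless_traceless_tail_proj[OF onb])

lemma sum_eigenvalues: "(\<Sum>a<dimS20 n. lam a) = scalar_curv n R / 2 + scalar_curv n R / real n"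
proof -
  define frame_sum where "frame_sum h =
      (\<Sum>i<n. \<Sum>j\<in>{..<n}-{i}. 1/4 * (tensor_inner n (sym_outer (e i) (e j)) h)\<^sup>2)
      + (\<Sum>i<n. 1 * (tensor_inner n (traceless_outer n (e i)) h)\<^sup>2)" for h
  have "frame_sum (E a) = 1" if "a < dimS20 n" for a
    using sum_sq_test_tensors[OF onb E_sym_traceless[OF that]] norm_E[OF that]
    by (simp add: frame_sum_def)
  then have "(\<Sum>a<dimS20 n. lam a) = (\<Sum>a<dimS20 n. lam a * frame_sum (E a))"
    by simp
  also have "\<dots> = (\<Sum>i<n. \<Sum>j\<in>{..<n}-{i}. 1/4 * weighted_coeff_sq lam (sym_outer (e i) (e j)))
      + (\<Sum>i<n. 1 * weighted_coeff_sq lam (traceless_outer n (e i)))"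
    unfolding frame_sum_def distrib_left sum.distrib weighted_coeff_sq_def
    by (intro arg_cong2[where f = "(+)"] sum_mult_double_sum sum_mult_single_sum)
  also have "\<dots> = (\<Sum>i<n. \<Sum>j\<in>{..<n}-{i}. 1/2 * sec i j)
      + (\<Sum>i<n. 2 / real n * ric i - scalar_curv n R / (real n)\<^sup>2)"
    by (intro arg_cong2[where f = "(+)"] sum.cong refl)
       (auto simp: weighted_coeff_sq_eigen sym_traceless_tests curv_form_sym_outer
        curv_form_traceless_outer sec_def ric_def)
  also have "(\<Sum>i<n. \<Sum>j\<in>{..<n}-{i}. 1/2 * sec i j) = (\<Sum>i<n. 1/2 * ric i)"
    using sum_sec_off_diag by (intro sum.cong refl) (simp add: sum_divide_distrib[symmetric])
  also have "\<dots> = 1/2 * scalar_curv n R"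
    by (simp add: sum_distrib_left scalar_curv_eq_sum_ric)
  also have "(\<Sum>i<n. 2 / real n * ric i - scalar_curv n R / (real n)\<^sup>2)
      = 2 / real n * scalar_curv n R - real n * (scalar_curv n R / (real n)\<^sup>2)"
    by (simp add: sum_subtractf sum_divide_distrib[symmetric] sum_distrib_left[symmetric]
        scalar_curv_eq_sum_ric)
  also have "1/2 * scalar_curv n R + (2 / real n * scalar_curv n R - real n * (scalar_curv n R / (real n)\<^sup>2))
      = scalar_curv n R / 2 + scalar_curv n R / real n"
    using p_less by (simp add: field_simps power2_eq_square)
  finally show ?thesis .
qed

lemma eig_avg_eq: "eig_avg (dimS20 n) lam = scalar_curv n R / (real n * real (n - 1))"
proof -
  have "1 \<le> n" "real n \<ge> 2" using p_pos p_less by simp_all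
  moreover have "real (n - 1) = real n - 1" "real (n + 2) = real n + 2"
    using p_less by (auto simp: of_nat_diff)
  ultimately show ?thesis
    unfolding eig_avg_def sum_eigenvalues real_dimS20[OF \<open>1 \<le> n\<close>]
    by (simp add: divide_simps) algebra
qed

definition tail_weight :: real where
  "tail_weight = real (n - p) / (2 * (real (n - p) + 1))"

text \<open>The weight \<open>d\<^sub>a\<close> of the header, evaluated at \<open>h = E a\<close>.\<close>
definition test_weight :: "(nat \<Rightarrow> nat \<Rightarrow> real) \<Rightarrow> real" where
  "test_weight h =
      (\<Sum>i<p. \<Sum>j\<in>{..<p}-{i}. 1/4 * (tensor_inner n (sym_outer (e i) (e j)) h)\<^sup>2)
    + (\<Sum>i<p. \<Sum>j\<in>{p..<n}. tail_weight/2 * (tensor_inner n (sym_outer (e i) (e j)) h)\<^sup>2)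
    + (\<Sum>i<p. tail_weight * (tensor_inner n (traceless_outer n (e i)) h)\<^sup>2)
    + tail_weight / real (n - p) * (tensor_inner n (traceless_tail_proj n e p) h)\<^sup>2"

lemma tail_weight_bounds: "0 \<le> tail_weight" "tail_weight \<le> 1/2"
  unfolding tail_weight_def by (auto simp: field_simps)

lemma sum_mult_test_weight:
  "(\<Sum>a<dimS20 n. g a * test_weight (E a))
     = (\<Sum>i<p. \<Sum>j\<in>{..<p}-{i}. 1/4 * weighted_coeff_sq g (sym_outer (e i) (e j)))
     + (\<Sum>i<p. \<Sum>j\<in>{p..<n}. tail_weight/2 * weighted_coeff_sq g (sym_outer (e i) (e j)))
     + (\<Sum>i<p. tail_weight * weighted_coeff_sq g (traceless_outer n (e i)))
     + tail_weight / real (n - p) * weighted_coeff_sq g (traceless_tail_proj n e p)"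
  unfolding test_weight_def distrib_left sum.distrib weighted_coeff_sq_def
  by (intro arg_cong2[where f = "(+)"] sum_mult_double_sum sum_mult_single_sum)
     (simp add: sum_distrib_left algebra_simps)

lemma sum_test_weight: "(\<Sum>a<dimS20 n. test_weight (E a)) = real (n - 1) * real p / 2"
proof -
  have "(\<Sum>a<dimS20 n. test_weight (E a)) = (\<Sum>a<dimS20 n. 1 * test_weight (E a))" by simp
  also have "\<dots> = (\<Sum>i<p. \<Sum>j\<in>{..<p}-{i}. 1/4 * 2) + (\<Sum>i<p. \<Sum>j\<in>{p..<n}. tail_weight/2 * 2)
      + (\<Sum>i<p. tail_weight * (1 - 1 / real n))
      + tail_weight / real (n - p) * (real (n - p) * real p / real n)"
    unfolding sum_mult_test_weight using p_less
    by (intro arg_cong2[where f = "(+)"] arg_cong2[where f = "(*)"] sum.cong refl)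
       (auto simp: weighted_coeff_sq_one sym_traceless_tests norm_sym_outer[OF onb]
         norm_traceless_outer[OF onb] norm_traceless_tail_proj[OF onb])
  also have "\<dots> = real (n - 1) * real p / 2"
    using p_pos p_less unfolding tail_weight_def
    by (simp add: of_nat_diff divide_simps) algebra
  finally show ?thesis .
qed

definition head_sec :: real where "head_sec = (\<Sum>i<p. \<Sum>j<p. sec i j)"
definition mixed_sec :: real where "mixed_sec = (\<Sum>i<p. \<Sum>j\<in>{p..<n}. sec i j)"
definition tail_sec :: real where "tail_sec = (\<Sum>k\<in>{p..<n}. \<Sum>l\<in>{p..<n}. sec k l)"

lemma sum_ric_head: "(\<Sum>i<p. ric i) = head_sec + mixed_sec"
  unfolding head_sec_def mixed_sec_def ric_eq_sum_sec sum.distrib[symmetric]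
  using p_less by (intro sum.cong refl sum_lessThan_split) simp

lemma sum_ric_tail: "(\<Sum>k\<in>{p..<n}. ric k) = mixed_sec + tail_sec"
proof -
  have "(\<Sum>k\<in>{p..<n}. ric k) = (\<Sum>k\<in>{p..<n}. \<Sum>l<p. sec k l) + tail_sec"
    unfolding tail_sec_def ric_eq_sum_sec sum.distrib[symmetric]
    using p_less by (intro sum.cong refl sum_lessThan_split) simp
  also have "(\<Sum>k\<in>{p..<n}. \<Sum>l<p. sec k l) = mixed_sec"
    unfolding mixed_sec_def by (subst sum.swap) (simp add: sec_commute)
  finally show ?thesis .
qed

lemma scalar_curv_blocks: "scalar_curv n R = head_sec + 2 * mixed_sec + tail_sec"
  unfolding scalar_curv_eq_sum_ric sum_lessThan_split[OF less_imp_le[OF p_less]] sum_ric_head sum_ric_tail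
  by simp

lemma sum_eigen_test_weight_curvatures:
  "(\<Sum>a<dimS20 n. lam a * test_weight (E a))
    = (\<Sum>i<p. \<Sum>j\<in>{..<p}-{i}. 1/4 * (2 * sec i j)) + (\<Sum>i<p. \<Sum>j\<in>{p..<n}. tail_weight/2 * (2 * sec i j))
      + (\<Sum>i<p. tail_weight * (2 / real n * ric i - scalar_curv n R / (real n)\<^sup>2))
      + tail_weight / real (n - p) * (- tail_sec + 2 * (real (n - p) / real n) * (\<Sum>k\<in>{p..<n}. ric k)
          - (real (n - p) / real n)\<^sup>2 * scalar_curv n R)"
  unfolding sum_mult_test_weight using p_less
  by (intro arg_cong2[where f = "(+)"] arg_cong2[where f = "(*)"] sum.cong refl)
     (auto simp: weighted_coeff_sq_eigen sym_traceless_tests curv_form_sym_outer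
       curv_form_traceless_outer curv_form_traceless_tail_proj sec_def ric_def tail_sec_def)

lemma sum_eigen_test_weight:
  "(\<Sum>a<dimS20 n. lam a * test_weight (E a))
    = (real (n - p) + 2) / (2 * (real (n - p) + 1)) * (\<Sum>i<p. ric i)
      - real p * scalar_curv n R / (2 * real n * (real (n - p) + 1))"
proof -
  have head: "(\<Sum>i<p. \<Sum>j\<in>{..<p}-{i}. 1/4 * (2 * sec i j)) = head_sec / 2"
  proof -
    have "(\<Sum>i<p. \<Sum>j\<in>{..<p}-{i}. 1/4 * (2 * sec i j)) = (\<Sum>i<p. 1/2 * (\<Sum>j<p. sec i j))"
      by (intro sum.cong refl) (simp add: sum_diff1 sec_same sum_distrib_left)
    then show ?thesis unfolding head_sec_def by (simp add: sum_divide_distrib[symmetric])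
  qed
  have mixed: "(\<Sum>i<p. \<Sum>j\<in>{p..<n}. tail_weight/2 * (2 * sec i j)) = tail_weight * mixed_sec"
    unfolding mixed_sec_def by (simp add: sum_distrib_left)
  have diag: "(\<Sum>i<p. tail_weight * (2 / real n * ric i - scalar_curv n R / (real n)\<^sup>2))
      = tail_weight * (2 / real n * (\<Sum>i<p. ric i) - real p * scalar_curv n R / (real n)\<^sup>2)"
    by (simp only: sum_distrib_left[symmetric] sum_subtractf sum_constant) (simp add: sum_distrib_left)
  show ?thesis
    unfolding sum_eigen_test_weight_curvatures head mixed diag sum_ric_tail
    unfolding sum_ric_head scalar_curv_blocks
    using p_pos p_less unfolding tail_weight_def by (simp add: of_nat_diff divide_simps) algebra
qed

lemma test_weight_basis_coeff:
  assumes h: "sym_traceless n h"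
  defines "H \<equiv> basis_coeff n e h"
  shows "test_weight h = (\<Sum>i<p. \<Sum>j\<in>{..<p}-{i}. (H i j)\<^sup>2)
      + (\<Sum>i<p. \<Sum>j\<in>{p..<n}. 2 * tail_weight * (H i j)\<^sup>2)
      + (\<Sum>i<p. tail_weight * (H i i)\<^sup>2)
      + tail_weight / real (n - p) * (\<Sum>k\<in>{p..<n}. H k k)\<^sup>2"
  unfolding test_weight_def H_def tensor_inner_sym_outer_basis[OF h]
    tensor_inner_traceless_outer_basis[OF h] tensor_inner_traceless_tail_proj_basis[OF h]
  by (simp add: power_mult_distrib mult.assoc)

lemma test_weight_nonneg: "sym_traceless n h \<Longrightarrow> 0 \<le> test_weight h"
  unfolding test_weight_def using tail_weight_bounds p_less
  by (intro add_nonneg_nonneg sum_nonneg mult_nonneg_nonneg) auto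

text \<open>Each summand of \<open>test_weight h\<close> is dominated by one block of \<open>\<Sum>\<^sub>i\<^sub>j h(e\<^sub>i,e\<^sub>j)\<^sup>2\<close>;
  this is where \<open>tail_weight \<le> 1/2\<close> is needed.\<close>
lemma test_weight_le_norm:
  assumes h: "sym_traceless n h"
  shows "test_weight h \<le> tensor_inner n h h"
proof -
  define H where "H = basis_coeff n e h"
  have head: "(\<Sum>i<p. \<Sum>j\<in>{..<p}-{i}. (H i j)\<^sup>2) + (\<Sum>i<p. tail_weight * (H i i)\<^sup>2)
      \<le> (\<Sum>i<p. \<Sum>j<p. (H i j)\<^sup>2)"
    using tail_weight_bounds by (intro sum_sq_off_diag_add_diag_le) auto
  have "(\<Sum>i<p. \<Sum>j\<in>{p..<n}. 2 * tail_weight * (H i j)\<^sup>2) \<le> (\<Sum>i<p. \<Sum>j\<in>{p..<n}. (H i j)\<^sup>2)"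
    using tail_weight_bounds by (intro sum_mono) (simp add: mult_left_le_one_le)
  then have mixed: "(\<Sum>i<p. \<Sum>j\<in>{p..<n}. 2 * tail_weight * (H i j)\<^sup>2)
      \<le> (\<Sum>i<p. \<Sum>j\<in>{p..<n}. (H i j)\<^sup>2) + (\<Sum>i\<in>{p..<n}. \<Sum>j<p. (H i j)\<^sup>2)"
    by (simp add: add_increasing2 sum_nonneg)
  have tail: "tail_weight / real (n - p) * (\<Sum>k\<in>{p..<n}. H k k)\<^sup>2
      \<le> (\<Sum>i\<in>{p..<n}. \<Sum>j\<in>{p..<n}. (H i j)\<^sup>2)"
    using weighted_sq_trace_le[of "{p..<n}" tail_weight H] tail_weight_bounds p_less by simp
  have add_blocks: "x1 + x2 + x3 + x4 \<le> y1 + y2 + y3 + y4"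
    if "x1 + x3 \<le> y1" "x2 \<le> y2 + y3" "x4 \<le> y4" for x1 x2 x3 x4 y1 y2 y3 y4 :: real
    using that by linarith
  have "test_weight h \<le> (\<Sum>i<n. \<Sum>j<n. (H i j)\<^sup>2)"
    unfolding test_weight_basis_coeff[OF h] H_def[symmetric]
      sum_lessThan_blocks[OF less_imp_le[OF p_less], of "\<lambda>i j. (H i j)\<^sup>2"]
    by (rule add_blocks[OF head mixed tail])
  then show ?thesis unfolding H_def sum_basis_coeff_sq[OF onb] .
qed

lemma test_weight_E_bounds:
  assumes "a < dimS20 n"
  shows "0 \<le> test_weight (E a)" "test_weight (E a) \<le> 1"
  using test_weight_nonneg[OF E_sym_traceless[OF assms]] test_weight_le_norm[OF E_sym_traceless[OF assms]]
    norm_E[OF assms] by auto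

lemma partial_ricci_lower_bound:
  assumes sorted: "\<And>a b. a \<le> b \<Longrightarrow> b < dimS20 n \<Longrightarrow> lam a \<le> lam b"
    and cone: "in_cone (dimS20 n) lam (real (n - 1) * real p / 2) \<theta>"
  shows "real (n - 1) * real p / real (n - p + 2) * (1 - real (n - p + 1) * \<theta>)
      * eig_avg (dimS20 n) lam \<le> (\<Sum>i<p. ric i)"
proof -
  define \<alpha> where "\<alpha> = real (n - 1) * real p / 2"
  have \<alpha>_pos: "0 < \<alpha>" unfolding \<alpha>_def using p_pos p_less by simp
  have "1 \<le> n" "real p < real (n + 2)" "0 < real (n - 1)" using p_pos p_less by simp_all
  then have "\<alpha> < real (dimS20 n)"
    unfolding \<alpha>_def real_dimS20[OF \<open>1 \<le> n\<close>] by (simp add: divide_strict_right_mono)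
  then have ky_fan: "eig_partial_sum lam \<alpha> \<le> (\<Sum>a<dimS20 n. lam a * test_weight (E a))"
    using \<alpha>_pos sorted test_weight_E_bounds
    by (intro eig_partial_sum_le) (auto simp: \<alpha>_def sum_test_weight)
  have cone_bound: "- \<theta> * eig_avg (dimS20 n) lam * \<alpha> \<le> eig_partial_sum lam \<alpha>"
    using cone \<alpha>_pos unfolding in_cone_def \<alpha>_def[symmetric] by (simp add: pos_le_divide_eq)
  have conv: "real (n - p + 2) = real (n - p) + 2" "real (n - p + 1) = real (n - p) + 1"
      "real (n - 1) = real n - 1"
    using p_less by (auto simp: of_nat_diff)
  have "0 < real (n - p)" "1 < real n" using p_pos p_less by auto
  moreover have "- \<theta> * (scalar_curv n R / (real n * (real n - 1))) * ((real n - 1) * real p / 2)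
      \<le> (real (n - p) + 2) / (2 * (real (n - p) + 1)) * (\<Sum>i<p. ric i)
        - real p * scalar_curv n R / (2 * real n * (real (n - p) + 1))"
    using cone_bound ky_fan unfolding sum_eigen_test_weight eig_avg_eq \<alpha>_def conv(3) by linarith
  ultimately show ?thesis unfolding eig_avg_eq conv by (rule cone_rearrange)
qed

end

theorem proposition5p1:
  fixes n p :: nat and R :: "nat \<Rightarrow> nat \<Rightarrow> nat \<Rightarrow> nat \<Rightarrow> real"
    and lam :: "nat \<Rightarrow> real" and \<theta> :: real and e :: "nat \<Rightarrow> nat \<Rightarrow> real"
  assumes "n \<ge> 3"
    and "alg_curv_tensor n R"
    and "sorted_eigenvalues_S20 n (Rring n R) lam"
    and "1 \<le> p" and "2 * p \<le> n"
    and "\<theta> > -1"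
    and "in_cone (dimS20 n) lam (real (n - 1) * real p / 2) \<theta>"
    and "orthonormal_basis n e"
  shows "(\<Sum>i<p. ricci n R (e i) (e i))
           \<ge> real (n - 1) * real p / real (n - p + 2)
              * (1 - real (n - p + 1) * \<theta>) * eig_avg (dimS20 n) lam"
proof -
  (* The hypotheses n \<ge> 3, 1 \<le> p and 2 p \<le> n enter only through 0 < p < n. *)
  from assms(3) obtain E where
    sorted: "\<And>a b. a \<le> b \<and> b < dimS20 n \<longrightarrow> lam a \<le> lam b" and
    eigen: "\<forall>a<dimS20 n. E a \<in> S20 n \<and> Rring n R (E a) = (\<lambda>i j. lam a * E a i j)" and
    orthonormal: "\<forall>a<dimS20 n. \<forall>b<dimS20 n. tensor_inner n (E a) (E b) = (if a = b then 1 else 0)"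
    unfolding sorted_eigenvalues_S20_def by blast
  interpret partial_ricci n E R lam e p
    using assms eigen orthonormal by unfold_locales (auto simp: curvature_tensor_def)
  show ?thesis
    using partial_ricci_lower_bound[OF _ assms(7)] sorted unfolding ric_def by auto
qed

end
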